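(* Consider the ellipse $\mathcal{E}_{e_0,c}$ and let $\mu_1(\varphi)=a_0e_h(\varphi)+a_1e_{\tau1}(\varphi)+b_1e_{\tau2}(\varphi)+a_2e_{hr}(\varphi)+b_2e_r(\varphi)$, where $a_0,a_1,b_1,a_2,b_2$ are sufficiently small. Then there exist a constant $C=C(e_0,c)$ and an ellipse $\widetilde{\mathcal{E}}=\mathcal{E}_{e_0,c}+\mu_{\widetilde{\mathcal{E}}}$ such that $\|\mu_1-\mu_{\widetilde{\mathcal{E}}}\|_{C^1}\le C\|\mu_1\|_{C^1}^2$.
   Context: $\mathcal{E}_{e_0,c}$ is the ellipse $x^2/a^2+y^2/b^2=1$, $0<b\le a$, eccentricity $e_0=\sqrt{1-b^2/a^2}\in[0,1)$, semi-focal distance $c=\sqrt{a^2-b^2}$; in elliptic coordinates $x=c\cosh\mu\cos\varphi$, $y=c\sinh\mu\sin\varphi$ it is $\{\mu=\mu_0\}$ with $\cosh\mu_0=1/e_0$. For a $2\pi$-periodic function $\nu$, $\mathcal{E}_{e_0,c}+\nu$ denotes the curve $\{(c\cosh(\mu_0+\nu(\varphi))\cos\varphi,\;c\sinh(\mu_0+\nu(\varphi))\sin\varphi)\}$. Elliptic motions: $e_h(\varphi)=\frac{1}{1-e_0^2\cos^2\varphi}$, $e_{\tau1}=\cos\varphi\,e_h$, $e_{\tau2}=\sin\varphi\,e_h$, $e_r=\sin(2\varphi)e_h$, $e_{hr}=\cos(2\varphi)e_h$. *)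

theory Defs
  imports "HOL-Analysis.Analysis"
begin

text \<open>Elliptic coordinate of the reference ellipse: cosh mu0 = 1/e0.\<close>
definition mu0 :: "real \<Rightarrow> real" where
  "mu0 e0 = arcosh (1 / e0)"

definition perturbed_curve :: "real \<Rightarrow> real \<Rightarrow> (real \<Rightarrow> real) \<Rightarrow> (real \<times> real) set" where
  "perturbed_curve e0 c nu =
     (\<lambda>\<phi>. (c * cosh (mu0 e0 + nu \<phi>) * cos \<phi>, c * sinh (mu0 e0 + nu \<phi>) * sin \<phi>)) ` UNIV"

definition is_ellipse :: "(real \<times> real) set \<Rightarrow> bool" where
  "is_ellipse S \<longleftrightarrow> (\<exists>x0 y0 A B \<theta>. A > 0 \<and> B > 0 \<and>
      S = (\<lambda>t. (x0 + A * cos t * cos \<theta> - B * sin t * sin \<theta>,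
                 y0 + A * cos t * sin \<theta> + B * sin t * cos \<theta>)) ` UNIV)"

definition e_h :: "real \<Rightarrow> real \<Rightarrow> real" where
  "e_h e0 \<phi> = 1 / (1 - e0\<^sup>2 * (cos \<phi>)\<^sup>2)"
definition e_tau1 :: "real \<Rightarrow> real \<Rightarrow> real" where
  "e_tau1 e0 \<phi> = cos \<phi> * e_h e0 \<phi>"
definition e_tau2 :: "real \<Rightarrow> real \<Rightarrow> real" where
  "e_tau2 e0 \<phi> = sin \<phi> * e_h e0 \<phi>"
definition e_r :: "real \<Rightarrow> real \<Rightarrow> real" where
  "e_r e0 \<phi> = sin (2 * \<phi>) * e_h e0 \<phi>"
definition e_hr :: "real \<Rightarrow> real \<Rightarrow> real" where
  "e_hr e0 \<phi> = cos (2 * \<phi>) * e_h e0 \<phi>"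

definition C1_norm :: "(real \<Rightarrow> real) \<Rightarrow> real" where
  "C1_norm f = (SUP \<phi>\<in>{0..2*pi}. \<bar>f \<phi>\<bar>) + (SUP \<phi>\<in>{0..2*pi}. \<bar>deriv f \<phi>\<bar>)"

definition C1_periodic :: "(real \<Rightarrow> real) \<Rightarrow> bool" where
  "C1_periodic f \<longleftrightarrow> (\<forall>x. f differentiable at x) \<and> continuous_on UNIV (deriv f)
      \<and> (\<forall>x. f (x + 2*pi) = f x)"

end

(*
  Write curves near the reference ellipse in elliptic coordinates as mu = mu0 + m(phi). The
  approximating ellipse is a perturbed conic
    (al0 + p) (x - x0)^2 + 2 q (x - x0) (y - y0) + (ga0 + r) (y - y0)^2 = 1
  of the reference ellipse al0 x^2 + ga0 y^2 = 1, whose equation in elliptic coordinates reads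
  G phi m = 0. Since G is increasing in m near m = 0 and changes sign there, its zero set is the
  graph of a C^1 function nu (an implicit function theorem on a band), so the conic is the curve
  E + nu. Linearizing G in m and in the parameters gives nu ~ -L/g with L linear in
  (p, q, r, x0, y0), and the parameters are chosen so that -L/g is exactly the given combination
  mu1 of elliptic motions. The remainder of the linearization is quadratic in |m| + t, where t
  bounds the parameters, so mu1 - nu = O(t^2) in C^1; finally t = O(||mu1||_C1), because the
  coefficients of a trigonometric polynomial of degree 2 are bounded by its sup norm.
*)

theory Submission
  imports Defs
begin

lemma abs_mult_le_mult:
  fixes a b x y :: real
  assumes "\<bar>a\<bar> \<le> x" "\<bar>b\<bar> \<le> y"
  shows "\<bar>a * b\<bar> \<le> x * y"
  unfolding abs_mult using assms by (intro mult_mono) auto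

lemma abs_divide_le_divide:
  fixes v B \<gamma> g :: real
  assumes "\<bar>v\<bar> \<le> B" "0 < \<gamma>" "\<gamma> \<le> g"
  shows "\<bar>v / g\<bar> \<le> B / \<gamma>"
  using assms by (simp add: abs_divide frac_le)

lemma sq_le_abs: "\<bar>m :: real\<bar> \<le> 1 \<Longrightarrow> m\<^sup>2 \<le> \<bar>m\<bar>"
  by (metis abs_ge_zero abs_square_le_1 mult_left_le power2_abs power2_eq_square)

lemma abs_add_twice_diff_diff_le:
  fixes a b c d A B C D :: real
  assumes "\<bar>a\<bar> \<le> A" "\<bar>b\<bar> \<le> B" "\<bar>c\<bar> \<le> C" "\<bar>d\<bar> \<le> D"
  shows "\<bar>a + 2 * b - c - d\<bar> \<le> A + 2 * B + C + D"
  using assms unfolding abs_le_iff by (intro conjI; linarith)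

lemma mvt_between:
  fixes f f' :: "real \<Rightarrow> real"
  assumes "\<And>z. (f has_real_derivative f' z) (at z)"
  obtains z where "min a b \<le> z" "z \<le> max a b" "f b - f a = (b - a) * f' z"
proof (cases a b rule: linorder_cases)
  case less
  with MVT2[of a b f f'] assms show ?thesis by (metis less_le_not_le max.absorb2 min.absorb1 that)
next
  case equal
  with that show ?thesis by auto
next
  case greater
  with MVT2[of b a f f'] assms obtain z where "b < z" "z < a" "f a - f b = (a - b) * f' z"
    by blast
  with that[of z] show ?thesis by (auto simp: algebra_simps)
qed

lemma tendsto_between:
  fixes f g :: "'a \<Rightarrow> real"
  assumes "(g \<longlongrightarrow> a) F" "eventually (\<lambda>z. min a (g z) \<le> f z \<and> f z \<le> max a (g z)) F"
  shows "(f \<longlongrightarrow> a) F"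
proof (rule tendsto_sandwich[of "\<lambda>z. min a (g z)" f F "\<lambda>z. max a (g z)"])
  show "((\<lambda>z. min a (g z)) \<longlongrightarrow> a) F" "((\<lambda>z. max a (g z)) \<longlongrightarrow> a) F"
    using tendsto_min[OF tendsto_const[of a] assms(1)] tendsto_max[OF tendsto_const[of a] assms(1)]
    by simp_all
qed (use assms(2) in \<open>auto elim: eventually_mono\<close>)

lemma exp_le_one_plus_x_plus_sq:
  fixes x :: real
  assumes "\<bar>x\<bar> \<le> 1"
  shows "exp x \<le> 1 + x + x\<^sup>2"
proof (cases "0 \<le> x")
  case True
  with exp_bound[of x] assms show ?thesis by simp
next
  case False
  have "1 - x \<le> exp (- x)" using exp_ge_add_one_self[of "- x"] by simp
  hence "exp x \<le> 1 / (1 - x)" using False by (simp add: exp_minus field_simps)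
  also have "\<dots> \<le> 1 + x + x\<^sup>2"
  proof -
    have "(1 - x) * (1 + x + x\<^sup>2) = 1 - x * x\<^sup>2" by (simp add: algebra_simps power2_eq_square)
    moreover have "x * x\<^sup>2 \<le> 0" using False by (simp add: mult_nonpos_nonneg)
    ultimately show ?thesis using False by (simp add: field_simps)
  qed
  finally show ?thesis .
qed

lemma cosh_minus_one_le_sq:
  fixes x :: real
  assumes "\<bar>x\<bar> \<le> 1"
  shows "cosh x - 1 \<le> x\<^sup>2"
  using exp_le_one_plus_x_plus_sq[of x] exp_le_one_plus_x_plus_sq[of "- x"] assms
  by (simp add: cosh_def) argo

lemma abs_sinh_minus_le_sq:
  fixes x :: real
  assumes "\<bar>x\<bar> \<le> 1"
  shows "\<bar>sinh x - x\<bar> \<le> x\<^sup>2"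
proof -
  have "sinh x = (exp x - exp (- x)) / 2" "1 - x \<le> exp (- x)" "(- x)\<^sup>2 = x\<^sup>2"
    using exp_ge_add_one_self[of "- x"] by (simp_all add: sinh_def)
  with exp_le_one_plus_x_plus_sq[of x] exp_le_one_plus_x_plus_sq[of "- x"] exp_ge_add_one_self[of x]
    assms show ?thesis
    unfolding abs_le_iff by argo
qed

lemma cosh_le_cosh_of_abs_le: "\<bar>x\<bar> \<le> y \<Longrightarrow> cosh x \<le> cosh (y :: real)"
proof -
  assume le: "\<bar>x\<bar> \<le> y"
  have "cosh \<bar>x\<bar> \<le> cosh y" using le cosh_real_nonneg_le_iff[of "\<bar>x\<bar>" y] by simp
  moreover have "cosh \<bar>x\<bar> = cosh x" by (cases "0 \<le> x") simp_all
  ultimately show ?thesis by simp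
qed

lemma abs_sinh_le_cosh: "\<bar>sinh x\<bar> \<le> cosh (x :: real)"
  using sinh_less_cosh_real[of "\<bar>x\<bar>"] by (simp add: sinh_real_abs)

section \<open>Zeros of a function increasing in a band\<close>

locale band_implicit =
  fixes G Gx Gy :: "real \<Rightarrow> real \<Rightarrow> real" and r \<gamma> K :: real
  assumes has_derivative_x: "\<And>x y. ((\<lambda>x. G x y) has_real_derivative Gx x y) (at x)"
    and has_derivative_y: "\<And>x y. ((\<lambda>y. G x y) has_real_derivative Gy x y) (at y)"
    and continuous_Gx: "continuous_on UNIV (case_prod Gx)"
    and continuous_Gy: "continuous_on UNIV (case_prod Gy)"
    and r_pos: "0 < r" and gamma_pos: "0 < \<gamma>"
    and Gy_ge: "\<And>x y. \<bar>y\<bar> \<le> r \<Longrightarrow> \<gamma> \<le> Gy x y"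
    and abs_Gx_le: "\<And>x y. \<bar>y\<bar> \<le> r \<Longrightarrow> \<bar>Gx x y\<bar> \<le> K"
    and G_lower_neg: "\<And>x. G x (- r) < 0"
    and G_upper_pos: "\<And>x. 0 < G x r"
begin

lemma G_increment_ge:
  assumes "- r \<le> a" "a \<le> b" "b \<le> r"
  shows "\<gamma> * (b - a) \<le> G x b - G x a"
proof -
  obtain z where z: "min a b \<le> z" "z \<le> max a b" "G x b - G x a = (b - a) * Gy x z"
    using mvt_between[OF has_derivative_y] .
  with assms have "\<gamma> \<le> Gy x z" by (intro Gy_ge) auto
  then have "\<gamma> * (b - a) \<le> Gy x z * (b - a)" using assms by (intro mult_right_mono) auto
  with z show ?thesis by (simp add: mult.commute)
qed

lemma gamma_dist_le_abs_G:
  assumes "\<bar>a\<bar> \<le> r" "\<bar>b\<bar> \<le> r"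
  shows "\<gamma> * \<bar>b - a\<bar> \<le> \<bar>G x b - G x a\<bar>"
proof (cases "a \<le> b")
  case True
  then show ?thesis using G_increment_ge[of a b x] assms by (simp add: abs_le_iff)
next
  case False
  then show ?thesis using G_increment_ge[of b a x] assms by (simp add: abs_le_iff)
qed

lemma ex1_zero_in_band: "\<exists>!y. \<bar>y\<bar> \<le> r \<and> G x y = 0"
proof (rule ex_ex1I)
  have "\<forall>y. - r \<le> y \<and> y \<le> r \<longrightarrow> isCont (G x) y"
    using DERIV_isCont[OF has_derivative_y] by simp
  then obtain y where "- r \<le> y" "y \<le> r" "G x y = 0"
    using IVT[of "G x" "- r" 0 r] less_imp_le[OF G_lower_neg] less_imp_le[OF G_upper_pos] r_pos
    by auto
  then show "\<exists>y. \<bar>y\<bar> \<le> r \<and> G x y = 0" by (intro exI[of _ y]) (simp add: abs_le_iff)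
next
  fix a b assume "\<bar>a\<bar> \<le> r \<and> G x a = 0" "\<bar>b\<bar> \<le> r \<and> G x b = 0"
  then show "a = b" using gamma_dist_le_abs_G[of a b x] gamma_pos by (simp add: mult_le_0_iff)
qed

definition implicit_fn :: "real \<Rightarrow> real" where
  "implicit_fn x = (THE y. \<bar>y\<bar> \<le> r \<and> G x y = 0)"

lemma abs_implicit_fn_le: "\<bar>implicit_fn x\<bar> \<le> r" and G_implicit_fn: "G x (implicit_fn x) = 0"
  using theI'[OF ex1_zero_in_band[of x]] unfolding implicit_fn_def by auto

lemma gamma_dist_implicit_fn_le: "\<bar>y\<bar> \<le> r \<Longrightarrow> \<gamma> * \<bar>y - implicit_fn x\<bar> \<le> \<bar>G x y\<bar>"
  using gamma_dist_le_abs_G[of "implicit_fn x" y x] abs_implicit_fn_le G_implicit_fn by simp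

lemma implicit_fn_unique: "\<bar>y\<bar> \<le> r \<Longrightarrow> G x y = 0 \<Longrightarrow> y = implicit_fn x"
  using gamma_dist_implicit_fn_le[of y x] gamma_pos by (simp add: mult_le_0_iff)

lemma implicit_fn_lipschitz: "\<gamma> * \<bar>implicit_fn a - implicit_fn b\<bar> \<le> K * \<bar>a - b\<bar>"
proof -
  obtain z where "G a (implicit_fn b) - G b (implicit_fn b) = (a - b) * Gx z (implicit_fn b)"
    using mvt_between[of "\<lambda>x. G x (implicit_fn b)", OF has_derivative_x] .
  then have "\<bar>G a (implicit_fn b)\<bar> \<le> \<bar>a - b\<bar> * K"
    using abs_Gx_le[OF abs_implicit_fn_le] G_implicit_fn by (simp add: abs_mult mult_left_mono)
  with gamma_dist_implicit_fn_le[OF abs_implicit_fn_le, of b a] show ?thesis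
    by (simp add: abs_minus_commute mult.commute)
qed

lemma implicit_fn_lipschitz_on: "(K / \<gamma>)-lipschitz_on UNIV implicit_fn"
proof (rule lipschitz_onI)
  have "\<bar>Gx 0 0\<bar> \<le> K" using r_pos by (intro abs_Gx_le) simp
  then show "0 \<le> K / \<gamma>" using gamma_pos by simp
  fix a b :: real
  show "dist (implicit_fn a) (implicit_fn b) \<le> K / \<gamma> * dist a b"
    using implicit_fn_lipschitz[of a b] gamma_pos by (simp add: dist_real_def field_simps)
qed

lemma isCont_implicit_fn: "isCont implicit_fn x"
  by (meson lipschitz_on_continuous_on[OF implicit_fn_lipschitz_on] continuous_on_eq_continuous_at open_UNIV UNIV_I)

lemma tendsto_Gx: "(f \<longlongrightarrow> a) F \<Longrightarrow> (g \<longlongrightarrow> b) F \<Longrightarrow> ((\<lambda>z. Gx (f z) (g z)) \<longlongrightarrow> Gx a b) F"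
proof -
  assume lim: "(f \<longlongrightarrow> a) F" "(g \<longlongrightarrow> b) F"
  have "isCont (case_prod Gx) (a, b)"
    by (meson continuous_Gx continuous_on_eq_continuous_at open_UNIV UNIV_I)
  from isCont_tendsto_compose[OF this tendsto_Pair[OF lim]] show ?thesis by simp
qed

lemma tendsto_Gy: "(f \<longlongrightarrow> a) F \<Longrightarrow> (g \<longlongrightarrow> b) F \<Longrightarrow> ((\<lambda>z. Gy (f z) (g z)) \<longlongrightarrow> Gy a b) F"
proof -
  assume lim: "(f \<longlongrightarrow> a) F" "(g \<longlongrightarrow> b) F"
  have "isCont (case_prod Gy) (a, b)"
    by (meson continuous_Gy continuous_on_eq_continuous_at open_UNIV UNIV_I)
  from isCont_tendsto_compose[OF this tendsto_Pair[OF lim]] show ?thesis by simp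
qed

lemma implicit_fn_has_derivative: "(implicit_fn has_real_derivative - Gx x (implicit_fn x) / Gy x (implicit_fn x)) (at x)"
proof -
  have "\<forall>y. \<exists>\<xi>. min x y \<le> \<xi> \<and> \<xi> \<le> max x y \<and>
      G y (implicit_fn y) - G x (implicit_fn y) = (y - x) * Gx \<xi> (implicit_fn y)"
    using mvt_between[of "\<lambda>x. G x _", OF has_derivative_x] by metis
  then obtain \<xi> where \<xi>: "\<And>y. min x y \<le> \<xi> y \<and> \<xi> y \<le> max x y \<and>
      G y (implicit_fn y) - G x (implicit_fn y) = (y - x) * Gx (\<xi> y) (implicit_fn y)"
    by metis
  have "\<forall>y. \<exists>\<eta>. min (implicit_fn x) (implicit_fn y) \<le> \<eta> \<and> \<eta> \<le> max (implicit_fn x) (implicit_fn y) \<and>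
      G x (implicit_fn y) - G x (implicit_fn x) = (implicit_fn y - implicit_fn x) * Gy x \<eta>"
    using mvt_between[of "G x", OF has_derivative_y] by metis
  then obtain \<eta> where \<eta>: "\<And>y. min (implicit_fn x) (implicit_fn y) \<le> \<eta> y \<and> \<eta> y \<le> max (implicit_fn x) (implicit_fn y) \<and>
      G x (implicit_fn y) - G x (implicit_fn x) = (implicit_fn y - implicit_fn x) * Gy x (\<eta> y)"
    by metis
  have Gy_\<eta>_pos: "0 < Gy x (\<eta> y)" for y
  proof -
    have "\<bar>\<eta> y\<bar> \<le> r" using \<eta>[of y] abs_implicit_fn_le[of x] abs_implicit_fn_le[of y] by (auto simp: abs_le_iff)
    then show ?thesis using Gy_ge gamma_pos by (meson less_le_trans)
  qed
  have quotient: "(implicit_fn y - implicit_fn x) / (y - x) = - Gx (\<xi> y) (implicit_fn y) / Gy x (\<eta> y)" if "y \<noteq> x" for y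
  proof -
    have "(y - x) * Gx (\<xi> y) (implicit_fn y) + (implicit_fn y - implicit_fn x) * Gy x (\<eta> y) = 0"
      using \<xi>[of y] \<eta>[of y] G_implicit_fn[of x] G_implicit_fn[of y] by linarith
    then show ?thesis using that Gy_\<eta>_pos[of y] by (simp add: field_simps)
  qed
  have implicit_fn_lim: "(implicit_fn \<longlongrightarrow> implicit_fn x) (at x)" using isCont_implicit_fn by (simp add: isCont_def)
  have "(\<xi> \<longlongrightarrow> x) (at x)" by (rule tendsto_between[OF tendsto_ident_at]) (use \<xi> in auto)
  moreover have "(\<eta> \<longlongrightarrow> implicit_fn x) (at x)" by (rule tendsto_between[OF implicit_fn_lim]) (use \<eta> in auto)
  moreover have "0 < Gy x (implicit_fn x)" using Gy_ge[OF abs_implicit_fn_le] gamma_pos by (meson less_le_trans)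
  ultimately have "((\<lambda>y. - Gx (\<xi> y) (implicit_fn y) / Gy x (\<eta> y)) \<longlongrightarrow> - Gx x (implicit_fn x) / Gy x (implicit_fn x)) (at x)"
    by (intro tendsto_intros tendsto_Gx tendsto_Gy implicit_fn_lim) auto
  moreover have "eventually (\<lambda>y. - Gx (\<xi> y) (implicit_fn y) / Gy x (\<eta> y) = (implicit_fn y - implicit_fn x) / (y - x)) (at x)"
    using quotient by (auto simp: eventually_at_filter)
  ultimately show ?thesis unfolding has_field_derivative_iff by (rule Lim_transform_eventually)
qed

lemma isCont_implicit_fn_derivative: "isCont (\<lambda>x. - Gx x (implicit_fn x) / Gy x (implicit_fn x)) x"
proof -
  have "0 < Gy x (implicit_fn x)" using Gy_ge[OF abs_implicit_fn_le] gamma_pos by (meson less_le_trans)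
  then show ?thesis
    unfolding isCont_def using isCont_implicit_fn[unfolded isCont_def]
    by (intro tendsto_intros tendsto_Gx tendsto_Gy tendsto_ident_at) auto
qed

end

section \<open>Conics, quadratic forms and the C^1 norm\<close>

lemma elliptic_coordinates_exist:
  fixes x y c :: real
  assumes "0 < c"
  obtains \<mu> \<phi> where "0 \<le> \<mu>" "x = c * cosh \<mu> * cos \<phi>" "y = c * sinh \<mu> * sin \<phi>"
proof -
  define w where "w = Arccos (Complex (x / c) (y / c))"
  have "cos w = Complex (x / c) (y / c)" unfolding w_def by simp
  from arg_cong[OF this, of Re] arg_cong[OF this, of Im] assms
  have x: "x = c * cosh (Im w) * cos (Re w)" and y: "y = - c * sinh (Im w) * sin (Re w)"
    by (simp_all add: Re_cos Im_cos cosh_def sinh_def field_simps)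
  show ?thesis
  proof (cases "0 \<le> Im w")
    case True
    with x y show ?thesis by (intro that[of "Im w" "- Re w"]) simp_all
  next
    case False
    with x y show ?thesis by (intro that[of "- Im w" "Re w"]) simp_all
  qed
qed

lemma exists_principal_angle:
  fixes a b g :: real
  obtains \<theta> where "(g - a) * sin (2 * \<theta>) + 2 * b * cos (2 * \<theta>) = 0"
proof (cases "(a - g)\<^sup>2 + 4 * b\<^sup>2 = 0")
  case True
  then have "a = g" "b = 0" by (auto simp: add_nonneg_eq_0_iff)
  then show ?thesis using that[of 0] by simp
next
  case False
  define \<rho> where "\<rho> = sqrt ((a - g)\<^sup>2 + 4 * b\<^sup>2)"
  have "0 < (a - g)\<^sup>2 + 4 * b\<^sup>2" using False by (simp add: order_less_le add_nonneg_nonneg)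
  then have \<rho>: "0 < \<rho>" "\<rho>\<^sup>2 = (a - g)\<^sup>2 + 4 * b\<^sup>2" unfolding \<rho>_def by simp_all
  then have "((a - g) / \<rho>)\<^sup>2 + (2 * b / \<rho>)\<^sup>2 = 1"
    using False by (simp add: power_divide add_divide_distrib[symmetric] power_mult_distrib)
  then obtain \<psi> where "(a - g) / \<rho> = cos \<psi>" "2 * b / \<rho> = sin \<psi>"
    by (rule sincos_total_2pi) auto
  then have "(g - a) * sin \<psi> + 2 * b * cos \<psi> = 0" using \<rho> by (auto simp: field_simps)
  then show ?thesis using that[of "\<psi> / 2"] by simp
qed

lemma rotated_axes_conic_is_ellipse:
  fixes l1 l2 x0 y0 \<theta> :: real
  assumes l1: "0 < l1" and l2: "0 < l2"
  shows "is_ellipse {(x, y). l1 * ((x - x0) * cos \<theta> + (y - y0) * sin \<theta>)\<^sup>2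
                           + l2 * ((y - y0) * cos \<theta> - (x - x0) * sin \<theta>)\<^sup>2 = 1}"
    (is "is_ellipse ?S")
proof -
  define A B where "A = 1 / sqrt l1" and "B = 1 / sqrt l2"
  have A: "0 < A" "l1 = 1 / A\<^sup>2" and B: "0 < B" "l2 = 1 / B\<^sup>2"
    using l1 l2 unfolding A_def B_def by (auto simp: power_divide)
  have unit: "(sin \<theta>)\<^sup>2 + (cos \<theta>)\<^sup>2 = 1" by simp
  let ?f = "\<lambda>t. (x0 + A * cos t * cos \<theta> - B * sin t * sin \<theta>, y0 + A * cos t * sin \<theta> + B * sin t * cos \<theta>)"
  have "?S = range ?f"
  proof (intro set_eqI iffI)
    fix z assume "z \<in> ?S"
    then obtain x y where z: "z = (x, y)"
      and "l1 * ((x - x0) * cos \<theta> + (y - y0) * sin \<theta>)\<^sup>2 + l2 * ((y - y0) * cos \<theta> - (x - x0) * sin \<theta>)\<^sup>2 = 1"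
      by auto
    then have "(((x - x0) * cos \<theta> + (y - y0) * sin \<theta>) / A)\<^sup>2 + (((y - y0) * cos \<theta> - (x - x0) * sin \<theta>) / B)\<^sup>2 = 1"
      using A B by (simp add: power_divide)
    then obtain t where "((x - x0) * cos \<theta> + (y - y0) * sin \<theta>) / A = cos t"
      and "((y - y0) * cos \<theta> - (x - x0) * sin \<theta>) / B = sin t" by (rule sincos_total_2pi)
    then have "(x - x0) * cos \<theta> + (y - y0) * sin \<theta> = A * cos t" "(y - y0) * cos \<theta> - (x - x0) * sin \<theta> = B * sin t"
      using A B by (auto simp: field_simps)
    then have "x = x0 + A * cos t * cos \<theta> - B * sin t * sin \<theta>" "y = y0 + A * cos t * sin \<theta> + B * sin t * cos \<theta>"
      using unit by algebra+
    then show "z \<in> range ?f" unfolding z by blast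
  next
    fix z assume "z \<in> range ?f"
    then obtain t where z: "z = ?f t" by blast
    have "(A * cos t * cos \<theta> - B * sin t * sin \<theta>) * cos \<theta> + (A * cos t * sin \<theta> + B * sin t * cos \<theta>) * sin \<theta> = A * cos t"
      "(A * cos t * sin \<theta> + B * sin t * cos \<theta>) * cos \<theta> - (A * cos t * cos \<theta> - B * sin t * sin \<theta>) * sin \<theta> = B * sin t"
      using unit by algebra+
    with A B show "z \<in> ?S" unfolding z by (simp add: power_mult_distrib)
  qed
  then show ?thesis unfolding is_ellipse_def using A(1) B(1) by blast
qed

lemma positive_definite_conic_is_ellipse:
  fixes a b g x0 y0 :: real
  assumes a: "0 < a" and g: "0 < g" and det: "b\<^sup>2 < a * g"
  shows "is_ellipse {(x, y). a * (x - x0)\<^sup>2 + 2 * b * (x - x0) * (y - y0) + g * (y - y0)\<^sup>2 = 1}"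
proof -
  obtain \<theta> where \<theta>: "(g - a) * sin (2 * \<theta>) + 2 * b * cos (2 * \<theta>) = 0"
    by (rule exists_principal_angle)
  define cs sn where "cs = cos \<theta>" and "sn = sin \<theta>"
  have unit: "cs\<^sup>2 + sn\<^sup>2 = 1" unfolding cs_def sn_def by simp
  have cross: "(g - a) * (2 * sn * cs) + 2 * b * (cs\<^sup>2 - sn\<^sup>2) = 0"
    using \<theta> unfolding cs_def sn_def sin_double cos_double by (simp add: algebra_simps)
  define l1 l2 where "l1 = a * cs\<^sup>2 + 2 * b * cs * sn + g * sn\<^sup>2"
    and "l2 = a * sn\<^sup>2 - 2 * b * sn * cs + g * cs\<^sup>2"
  have diag: "a * u\<^sup>2 + 2 * b * u * v + g * v\<^sup>2 = l1 * (u * cs + v * sn)\<^sup>2 + l2 * (v * cs - u * sn)\<^sup>2" for u v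
    using cross unit unfolding l1_def l2_def by algebra
  have "l1 * l2 = a * g - b\<^sup>2" "l1 + l2 = a + g"
    using cross unit unfolding l1_def l2_def by algebra+
  then have "0 < l1 * l2" "0 < l1 + l2" using a g det by simp_all
  then have "0 < l1" "0 < l2" by (auto simp: zero_less_mult_iff)
  with diag show ?thesis
    using rotated_axes_conic_is_ellipse[of l1 l2 x0 \<theta> y0] unfolding cs_def sn_def by simp
qed

definition qform :: "real \<Rightarrow> real \<Rightarrow> real \<Rightarrow> real \<Rightarrow> real \<Rightarrow> real \<Rightarrow> real \<Rightarrow> real" where
  "qform p q r x y u v = p * x * u + q * (x * v + y * u) + r * y * v"

lemma abs_qform_le:
  assumes "\<bar>p\<bar> \<le> t" "\<bar>q\<bar> \<le> t" "\<bar>r\<bar> \<le> t"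
    and "\<bar>x\<bar> \<le> A" "\<bar>y\<bar> \<le> A" "\<bar>u\<bar> \<le> B" "\<bar>v\<bar> \<le> B"
  shows "\<bar>qform p q r x y u v\<bar> \<le> 4 * t * A * B"
proof -
  have "\<bar>p * x * u\<bar> \<le> t * A * B" "\<bar>r * y * v\<bar> \<le> t * A * B"
    using assms by (intro abs_mult_le_mult; simp)+
  moreover have "\<bar>x * v + y * u\<bar> \<le> 2 * (A * B)"
    using abs_mult_le_mult[of x A v B] abs_mult_le_mult[of y A u B] assms abs_triangle_ineq[of "x * v" "y * u"]
    by linarith
  then have "\<bar>q * (x * v + y * u)\<bar> \<le> t * (2 * (A * B))" using assms by (intro abs_mult_le_mult)
  ultimately show ?thesis unfolding qform_def by (simp add: abs_triangle_ineq algebra_simps)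
qed

lemma abs_qform_linear_le:
  assumes "\<bar>p\<bar> \<le> t" "\<bar>q\<bar> \<le> t" "\<bar>r\<bar> \<le> t" "\<bar>x0\<bar> \<le> t" "\<bar>y0\<bar> \<le> t"
    and "\<bar>a\<bar> \<le> K" "\<bar>b\<bar> \<le> K"
    and "\<bar>x\<bar> \<le> B" "\<bar>y\<bar> \<le> B" "\<bar>u\<bar> \<le> B" "\<bar>v\<bar> \<le> B" "\<bar>x'\<bar> \<le> B" "\<bar>y'\<bar> \<le> B"
  shows "\<bar>2 * qform p q r x y u v - 2 * a * x' * x0 - 2 * b * y' * y0\<bar> \<le> 4 * (2 * B + K) * B * t"
proof -
  have two: "\<bar>2 :: real\<bar> \<le> 2" by simp
  have "\<bar>2 * qform p q r x y u v - 2 * a * x' * x0 - 2 * b * y' * y0\<bar>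
      \<le> \<bar>2 * qform p q r x y u v\<bar> + \<bar>2 * a * x' * x0\<bar> + \<bar>2 * b * y' * y0\<bar>"
    using abs_triangle_ineq4[of "2 * qform p q r x y u v" "2 * a * x' * x0"]
      abs_triangle_ineq4[of "2 * qform p q r x y u v - 2 * a * x' * x0" "2 * b * y' * y0"]
    by linarith
  also have "\<dots> \<le> 2 * (4 * t * B * B) + 2 * K * B * t + 2 * K * B * t"
    using abs_mult_le_mult[OF two abs_qform_le[OF assms(1-3,8-11)]]
      abs_mult_le_mult[OF abs_mult_le_mult[OF abs_mult_le_mult[OF two assms(6)] assms(12)] assms(4)]
      abs_mult_le_mult[OF abs_mult_le_mult[OF abs_mult_le_mult[OF two assms(7)] assms(13)] assms(5)]
    by (intro add_mono)
  also have "\<dots> = 4 * (2 * B + K) * B * t" by algebra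
  finally show ?thesis .
qed

lemma qform_diff:
  "qform p q r x y u v - qform p q r x' y' u' v'
     = qform p q r (x - x') (y - y') u v + qform p q r x' y' (u - u') (v - v')"
  unfolding qform_def by (simp add: algebra_simps)

lemma abs_qform_diff_le:
  assumes "\<bar>p\<bar> \<le> t" "\<bar>q\<bar> \<le> t" "\<bar>r\<bar> \<le> t"
    and "\<bar>x - x'\<bar> \<le> d" "\<bar>y - y'\<bar> \<le> d" "\<bar>u - u'\<bar> \<le> d" "\<bar>v - v'\<bar> \<le> d"
    and "\<bar>u\<bar> \<le> B" "\<bar>v\<bar> \<le> B" "\<bar>x'\<bar> \<le> B" "\<bar>y'\<bar> \<le> B"
  shows "\<bar>qform p q r x y u v - qform p q r x' y' u' v'\<bar> \<le> 8 * t * B * d"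
proof -
  have "\<bar>qform p q r (x - x') (y - y') u v\<bar> \<le> 4 * t * d * B"
    using abs_qform_le[OF assms(1-3) assms(4,5) assms(8,9)] .
  moreover have "\<bar>qform p q r x' y' (u - u') (v - v')\<bar> \<le> 4 * t * B * d"
    using abs_qform_le[OF assms(1-3) assms(10,11) assms(6,7)] .
  moreover have "4 * t * d * B = 4 * t * B * d" by simp
  ultimately show ?thesis
    unfolding qform_diff
    using abs_triangle_ineq[of "qform p q r (x - x') (y - y') u v" "qform p q r x' y' (u - u') (v - v')"]
    by linarith
qed

lemma C1_norm_le:
  assumes "\<And>\<phi>. \<phi> \<in> {0..2 * pi} \<Longrightarrow> \<bar>f \<phi>\<bar> \<le> A"
    and "\<And>\<phi>. \<phi> \<in> {0..2 * pi} \<Longrightarrow> \<bar>deriv f \<phi>\<bar> \<le> B"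
  shows "C1_norm f \<le> A + B"
  unfolding C1_norm_def using assms by (intro add_mono cSUP_least) auto

lemma abs_le_C1_norm:
  assumes "\<And>x. (f has_real_derivative f' x) (at x)" "continuous_on {0..2 * pi} f'"
    and "\<phi> \<in> {0..2 * pi}"
  shows "\<bar>f \<phi>\<bar> \<le> C1_norm f"
proof -
  have "deriv f = f'" using assms(1) by (intro ext DERIV_imp_deriv)
  have "continuous_on {0..2 * pi} f"
    using assms(1) by (meson DERIV_isCont continuous_at_imp_continuous_on)
  then have "bounded ((\<lambda>x. \<bar>f x\<bar>) ` {0..2 * pi})" "bounded ((\<lambda>x. \<bar>f' x\<bar>) ` {0..2 * pi})"
    using assms(2) by (auto intro!: compact_imp_bounded compact_continuous_image continuous_intros)
  then have "bdd_above ((\<lambda>x. \<bar>f x\<bar>) ` {0..2 * pi})" "bdd_above ((\<lambda>x. \<bar>f' x\<bar>) ` {0..2 * pi})"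
    by (auto intro: bounded_imp_bdd_above)
  moreover have "0 \<le> \<bar>f' 0\<bar>" by simp
  ultimately show ?thesis
    unfolding C1_norm_def \<open>deriv f = f'\<close> using assms(3)
    by (smt (verit) atLeastAtMost_iff cSUP_upper pi_ge_zero)
qed

lemma trig_poly_coefficients_le:
  fixes a0 a1 b1 a2 b2 N :: real
  assumes "\<And>\<phi>. \<phi> \<in> {0..2 * pi} \<Longrightarrow>
    \<bar>a0 + a1 * cos \<phi> + b1 * sin \<phi> + a2 * cos (2 * \<phi>) + b2 * sin (2 * \<phi>)\<bar> \<le> N"
  shows "\<bar>a0\<bar> + \<bar>a1\<bar> + \<bar>b1\<bar> + \<bar>a2\<bar> + \<bar>b2\<bar> \<le> 8 * N"
proof -
  have "\<bar>a0 + a1 + a2\<bar> \<le> N" "\<bar>a0 - a1 + a2\<bar> \<le> N" using assms[of 0] assms[of pi] by simp_all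
  moreover have "\<bar>a0 + b1 - a2\<bar> \<le> N" using assms[of "pi / 2"] by simp
  moreover have "\<bar>a0 - b1 - a2\<bar> \<le> N"
  proof -
    have "cos (2 * (3 / 2 * pi)) = -1" "sin (2 * (3 / 2 * pi)) = 0"
      using cos_periodic_pi[of pi] sin_periodic_pi[of pi] by (simp_all add: algebra_simps)
    moreover have "cos (3 / 2 * pi) = 0" "sin (3 / 2 * pi) = -1"
      using cos_3over2_pi sin_3over2_pi by (simp_all add: divide_simps)
    ultimately show ?thesis using assms[of "3 / 2 * pi"] by simp
  qed
  ultimately have coeffs: "\<bar>a0\<bar> \<le> N" "\<bar>a1\<bar> \<le> N" "\<bar>b1\<bar> \<le> N" "\<bar>a2\<bar> \<le> N" by (simp_all add: abs_le_iff)
  have "\<bar>a0 + (a1 + b1) * (sqrt 2 / 2) + b2\<bar> \<le> N"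
    using assms[of "pi / 4"] by (simp add: cos_45 sin_45 algebra_simps add_divide_distrib)
  moreover have "sqrt 2 / 2 \<le> 1" using real_sqrt_le_mono[of 2 4] by simp
  then have "\<bar>(a1 + b1) * (sqrt 2 / 2)\<bar> \<le> 2 * N * 1"
    using coeffs by (intro abs_mult_le_mult) (auto simp: abs_le_iff)
  ultimately have "\<bar>b2\<bar> \<le> 4 * N" using coeffs by (simp add: abs_le_iff)
  with coeffs show ?thesis by simp
qed

section \<open>The reference ellipse\<close>

locale confocal_ellipse =
  fixes e0 c :: real
  assumes e0_pos: "0 < e0" and e0_less_1: "e0 < 1" and c_pos: "0 < c"
begin

definition m0 :: real where "m0 = mu0 e0"

definition ch0 :: real where "ch0 = cosh m0"

definition sh0 :: real where "sh0 = sinh m0"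

text \<open>The reference ellipse is \<open>al0 x\<^sup>2 + ga0 y\<^sup>2 = 1\<close>, with semi-axes \<open>c ch0\<close> and \<open>c sh0\<close>.\<close>

definition al0 :: real where "al0 = 1 / (c * ch0)\<^sup>2"

definition ga0 :: real where "ga0 = 1 / (c * sh0)\<^sup>2"

definition w :: "real \<Rightarrow> real" where
  "w \<phi> = (cos \<phi>)\<^sup>2 / ch0\<^sup>2 + (sin \<phi>)\<^sup>2 / sh0\<^sup>2"

definition dw :: "real \<Rightarrow> real" where
  "dw \<phi> = 2 * cos \<phi> * sin \<phi> * (1 / sh0\<^sup>2 - 1 / ch0\<^sup>2)"

text \<open>\<open>M \<ge> 1\<close> bounds all coefficients, coordinates and their derivatives for \<open>\<bar>m\<bar> \<le> 1\<close>;
  \<open>lb\<close> bounds from below the radial slope of the conic equation on \<open>\<bar>m\<bar> \<le> r0\<close> and its sign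
  margins outside.\<close>

definition M :: real where
  "M = (c + 1) * cosh (m0 + 1) + (1 + 1 / c\<^sup>2) * (2 / sh0\<^sup>2)"

definition r0 :: real where "r0 = min 1 (m0 / 2)"

definition lb :: real where
  "lb = min 1 (min (e0\<^sup>2 * (1 - (ch0 / cosh (m0 + r0))\<^sup>2))
                   (min (e0\<^sup>2 * (ch0\<^sup>2 - (cosh (m0 - r0))\<^sup>2)) (e0\<^sup>2 * sinh (m0 / 2))))"

definition eps0 :: real where "eps0 = lb / (32 * M ^ 4)"

definition K_error :: real where "K_error = 320 * (M ^ 3 / lb)\<^sup>2 * (20 * M ^ 4 / lb + 1)\<^sup>2"

definition K_param :: real where "K_param = 2 * ch0 / sh0 * (al0 + ga0) + 2 * ga0 + c * ch0\<^sup>2 / sh0 + c * ch0"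

lemma ch0_eq: "ch0 = 1 / e0"
  using e0_pos e0_less_1 by (simp add: ch0_def m0_def mu0_def)

lemma m0_pos: "0 < m0"
  using e0_pos e0_less_1 by (simp add: m0_def mu0_def)

lemma sh0_pos: "0 < sh0"
  using m0_pos by (simp add: sh0_def)

lemma ch0_gt_1: "1 < ch0"
  using e0_pos e0_less_1 by (simp add: ch0_eq)

lemma ch0_sq: "ch0\<^sup>2 = sh0\<^sup>2 + 1"
  by (simp add: ch0_def sh0_def cosh_square_eq)

lemma sh0_less_ch0: "sh0 < ch0"
  by (simp add: ch0_def sh0_def sinh_less_cosh_real)

lemma al0_mult: "al0 * c\<^sup>2 * ch0\<^sup>2 = 1" and ga0_mult: "ga0 * c\<^sup>2 * sh0\<^sup>2 = 1"
  using c_pos ch0_gt_1 sh0_pos by (simp_all add: al0_def ga0_def power_mult_distrib)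

lemma cosh_m0_add_eq: "cosh (m0 + m) = ch0 * cosh m + sh0 * sinh m"
  by (simp add: cosh_add ch0_def sh0_def)

lemma sinh_m0_add_eq: "sinh (m0 + m) = sh0 * cosh m + ch0 * sinh m"
  by (simp add: sinh_add ch0_def sh0_def algebra_simps)

lemma e0_sq_le_w: "e0\<^sup>2 \<le> w \<phi>"
proof -
  have "(sin \<phi>)\<^sup>2 / ch0\<^sup>2 \<le> (sin \<phi>)\<^sup>2 / sh0\<^sup>2"
    using sh0_pos sh0_less_ch0 by (intro divide_left_mono power_mono) auto
  moreover have "(cos \<phi>)\<^sup>2 / ch0\<^sup>2 + (sin \<phi>)\<^sup>2 / ch0\<^sup>2 = ((cos \<phi>)\<^sup>2 + (sin \<phi>)\<^sup>2) / ch0\<^sup>2"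
    by (rule add_divide_distrib[symmetric])
  then have "(cos \<phi>)\<^sup>2 / ch0\<^sup>2 + (sin \<phi>)\<^sup>2 / ch0\<^sup>2 = e0\<^sup>2"
    by (simp add: ch0_eq power_divide)
  ultimately show ?thesis unfolding w_def by linarith
qed

lemma w_has_derivative: "(w has_real_derivative dw \<phi>) (at \<phi>)"
  unfolding w_def dw_def using ch0_gt_1 sh0_pos
  by (auto intro!: derivative_eq_intros simp: field_simps power2_eq_square)

lemma cosh_m0_add_le: "\<bar>m\<bar> \<le> 1 \<Longrightarrow> cosh (m0 + m) \<le> cosh (m0 + 1)"
  using m0_pos by (intro cosh_le_cosh_of_abs_le) (auto simp: abs_le_iff)

lemma c_plus_1_le_M: "c + 1 \<le> M"
proof -
  have "c + 1 \<le> (c + 1) * cosh (m0 + 1)"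
    using c_pos cosh_real_ge_1[of "m0 + 1"] by (simp add: mult_le_cancel_left1)
  moreover have "0 \<le> (1 + 1 / c\<^sup>2) * (2 / sh0\<^sup>2)" by simp
  ultimately show ?thesis unfolding M_def by linarith
qed

lemma one_le_M: "1 \<le> M" and c_le_M: "c \<le> M"
  using c_plus_1_le_M c_pos by linarith+

lemma coordinate_bounds:
  assumes "\<bar>m\<bar> \<le> 1"
  shows "c * cosh (m0 + m) + 1 \<le> M" "c * \<bar>sinh (m0 + m)\<bar> + 1 \<le> M"
    "cosh (m0 + m) \<le> M" "\<bar>sinh (m0 + m)\<bar> \<le> M"
proof -
  have C: "cosh (m0 + m) \<le> cosh (m0 + 1)" using cosh_m0_add_le[OF assms] .
  have S: "\<bar>sinh (m0 + m)\<bar> \<le> cosh (m0 + m)" by (rule abs_sinh_le_cosh)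
  have "(c + 1) * cosh (m0 + 1) \<le> M" unfolding M_def by simp
  moreover have "(c + 1) * cosh (m0 + 1) = c * cosh (m0 + 1) + cosh (m0 + 1)" by (simp add: distrib_right)
  moreover have "c * cosh (m0 + m) \<le> c * cosh (m0 + 1)" using C c_pos by simp
  moreover have "c * \<bar>sinh (m0 + m)\<bar> \<le> c * cosh (m0 + m)" using S c_pos by simp
  moreover have "0 \<le> c * cosh (m0 + 1)" using c_pos cosh_real_ge_1[of "m0 + 1"] by simp
  ultimately show "c * cosh (m0 + m) + 1 \<le> M" "c * \<bar>sinh (m0 + m)\<bar> + 1 \<le> M"
    "cosh (m0 + m) \<le> M" "\<bar>sinh (m0 + m)\<bar> \<le> M" using S C cosh_real_ge_1[of "m0 + 1"] by linarith+
qed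

lemma ch0_le_M: "ch0 \<le> M" and sh0_le_M: "sh0 \<le> M"
  using coordinate_bounds(3,4)[of 0] sh0_pos by (simp_all add: ch0_def sh0_def)

lemma inv_sh0_sq_le: "2 / sh0\<^sup>2 \<le> M"
proof -
  have "(c + 1) * cosh (m0 + 1) \<ge> 0" using c_pos cosh_real_ge_1[of "m0 + 1"] by simp
  moreover have "(1 + 1 / c\<^sup>2) * (2 / sh0\<^sup>2) = 2 / sh0\<^sup>2 + (1 / c\<^sup>2) * (2 / sh0\<^sup>2)"
    by (simp only: distrib_right mult_1)
  moreover have "0 \<le> (1 / c\<^sup>2) * (2 / sh0\<^sup>2)" by simp
  ultimately show ?thesis unfolding M_def by linarith
qed

lemma al0_le_ga0: "al0 \<le> ga0"
  unfolding al0_def ga0_def using c_pos sh0_pos sh0_less_ch0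
  by (intro divide_left_mono power_mono mult_left_mono) auto

lemma ga0_le_M: "ga0 \<le> M"
proof -
  have "ga0 = (1 / c\<^sup>2) * (1 / sh0\<^sup>2)" by (simp add: ga0_def power_mult_distrib)
  also have "\<dots> \<le> (1 + 1 / c\<^sup>2) * (2 / sh0\<^sup>2)"
    using sh0_pos by (intro mult_mono divide_right_mono) auto
  also have "\<dots> \<le> M" unfolding M_def using c_pos cosh_real_ge_1[of "m0 + 1"] by simp
  finally show ?thesis .
qed

lemma al0_le_M: "al0 \<le> M"
  using al0_le_ga0 ga0_le_M by linarith

lemma abs_al0_le: "\<bar>al0\<bar> \<le> M" and abs_ga0_le: "\<bar>ga0\<bar> \<le> M"
  using al0_le_M ga0_le_M by (simp_all add: al0_def ga0_def)

lemma M_sq_le_M4: "M\<^sup>2 \<le> M ^ 4"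
  using one_le_M by (simp add: power_increasing)

lemma M_le_M3: "M \<le> M ^ 3"
  using power_increasing[of 1 3 M] one_le_M by simp

lemma w_le_M: "w \<phi> \<le> M"
proof -
  have "(cos \<phi>)\<^sup>2 / ch0\<^sup>2 \<le> 1 / sh0\<^sup>2"
    using sh0_pos sh0_less_ch0 by (intro frac_le) (auto simp: abs_square_le_1 power_mono)
  moreover have "(sin \<phi>)\<^sup>2 / sh0\<^sup>2 \<le> 1 / sh0\<^sup>2"
    using sh0_pos by (intro divide_right_mono) (auto simp: abs_square_le_1)
  ultimately show ?thesis using inv_sh0_sq_le unfolding w_def by simp
qed

lemma abs_w_le_M: "\<bar>w \<phi>\<bar> \<le> M"
proof -
  have "0 \<le> w \<phi>" using e0_sq_le_w[of \<phi>] zero_le_power2[of e0] by linarith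
  then show ?thesis using w_le_M[of \<phi>] by simp
qed

lemma abs_dw_le_M: "\<bar>dw \<phi>\<bar> \<le> M"
proof -
  have "0 \<le> 1 / sh0\<^sup>2 - 1 / ch0\<^sup>2" "1 / sh0\<^sup>2 - 1 / ch0\<^sup>2 \<le> 1 / sh0\<^sup>2"
    using sh0_pos sh0_less_ch0 by (auto intro!: divide_left_mono power_mono)
  moreover have "2 * cos \<phi> * sin \<phi> = sin (2 * \<phi>)" by (simp add: sin_double)
  then have "\<bar>2 * cos \<phi> * sin \<phi>\<bar> \<le> 2" using abs_sin_le_one[of "2 * \<phi>"] by linarith
  ultimately have "\<bar>dw \<phi>\<bar> \<le> 2 * (1 / sh0\<^sup>2)" unfolding dw_def by (intro abs_mult_le_mult) auto
  then show ?thesis using inv_sh0_sq_le by simp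
qed

lemma inv_M4_le_al0: "1 / M ^ 4 \<le> al0" and inv_M4_le_ga0: "1 / M ^ 4 \<le> ga0"
proof -
  have "(c * ch0)\<^sup>2 \<le> (M * M)\<^sup>2" "(c * sh0)\<^sup>2 \<le> (M * M)\<^sup>2"
    using c_le_M ch0_le_M sh0_le_M c_pos ch0_gt_1 sh0_pos by (intro power_mono mult_mono; simp)+
  then show "1 / M ^ 4 \<le> al0" "1 / M ^ 4 \<le> ga0"
    unfolding al0_def ga0_def using c_pos ch0_gt_1 sh0_pos one_le_M
    by (auto intro!: divide_left_mono simp: power_mult_distrib simp flip: power_add)
qed

lemma cosh_m0_add_taylor:
  assumes "\<bar>m\<bar> \<le> 1"
  shows "\<bar>cosh (m0 + m) - ch0 - sh0 * m\<bar> \<le> 2 * M * m\<^sup>2"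
proof -
  have "\<bar>cosh (m0 + m) - ch0 - sh0 * m\<bar> = \<bar>ch0 * (cosh m - 1) + sh0 * (sinh m - m)\<bar>"
    unfolding cosh_m0_add_eq by (simp add: algebra_simps)
  also have "\<dots> \<le> M * m\<^sup>2 + M * m\<^sup>2"
    using cosh_minus_one_le_sq[OF assms] cosh_real_ge_1[of m] abs_sinh_minus_le_sq[OF assms]
      ch0_le_M sh0_le_M ch0_gt_1 sh0_pos
    by (intro order.trans[OF abs_triangle_ineq] add_mono abs_mult_le_mult) auto
  finally show ?thesis by simp
qed

lemma abs_cosh_m0_add_diff_le:
  assumes "\<bar>m\<bar> \<le> 1"
  shows "\<bar>cosh (m0 + m) - ch0\<bar> \<le> 3 * M * \<bar>m\<bar>"
proof -
  have "\<bar>sh0 * m\<bar> \<le> M * \<bar>m\<bar>" using sh0_le_M sh0_pos by (intro abs_mult_le_mult) auto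
  moreover have "M * m\<^sup>2 \<le> M * \<bar>m\<bar>" using sq_le_abs[OF assms] one_le_M by simp
  ultimately show ?thesis using cosh_m0_add_taylor[OF assms] by linarith
qed

lemma abs_sinh_m0_add_diff_le:
  assumes "\<bar>m\<bar> \<le> 1"
  shows "\<bar>sinh (m0 + m) - sh0\<bar> \<le> 3 * M * \<bar>m\<bar>"
proof -
  have "\<bar>sinh m\<bar> \<le> 2 * \<bar>m\<bar>" using abs_sinh_minus_le_sq[OF assms] sq_le_abs[OF assms] by linarith
  then have "\<bar>ch0 * sinh m\<bar> \<le> M * (2 * \<bar>m\<bar>)" using ch0_le_M ch0_gt_1 by (intro abs_mult_le_mult) auto
  moreover have "\<bar>sh0 * (cosh m - 1)\<bar> \<le> M * \<bar>m\<bar>"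
    using cosh_minus_one_le_sq[OF assms] cosh_real_ge_1[of m] sq_le_abs[OF assms] sh0_le_M sh0_pos
    by (intro abs_mult_le_mult) auto
  moreover have "sinh (m0 + m) - sh0 = sh0 * (cosh m - 1) + ch0 * sinh m"
    unfolding sinh_m0_add_eq by (simp add: algebra_simps)
  ultimately show ?thesis using abs_triangle_ineq[of "sh0 * (cosh m - 1)" "ch0 * sinh m"] by linarith
qed

lemma cosh_sq_m0_add_taylor:
  assumes "\<bar>m\<bar> \<le> 1"
  shows "\<bar>(cosh (m0 + m))\<^sup>2 - ch0\<^sup>2 - 2 * ch0 * sh0 * m\<bar> \<le> 13 * M\<^sup>2 * m\<^sup>2"
proof -
  have "(cosh (m0 + m))\<^sup>2 - ch0\<^sup>2 - 2 * ch0 * sh0 * m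
      = (cosh (m0 + m) - ch0)\<^sup>2 + 2 * ch0 * (cosh (m0 + m) - ch0 - sh0 * m)"
    by (simp add: algebra_simps power2_eq_square)
  then have "\<bar>(cosh (m0 + m))\<^sup>2 - ch0\<^sup>2 - 2 * ch0 * sh0 * m\<bar>
      \<le> \<bar>(cosh (m0 + m) - ch0)\<^sup>2\<bar> + \<bar>2 * ch0 * (cosh (m0 + m) - ch0 - sh0 * m)\<bar>"
    by (simp only: abs_triangle_ineq)
  also have "\<dots> \<le> (3 * M * \<bar>m\<bar>)\<^sup>2 + (2 * M) * (2 * M * m\<^sup>2)"
    using power_mono[OF abs_cosh_m0_add_diff_le[OF assms] abs_ge_zero, of 2]
      cosh_m0_add_taylor[OF assms] ch0_le_M ch0_gt_1
    by (intro add_mono abs_mult_le_mult) auto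
  also have "\<dots> = 13 * M\<^sup>2 * m\<^sup>2" by (simp add: power_mult_distrib power2_eq_square)
  finally show ?thesis .
qed

lemma abs_cosh_sq_m0_add_diff_le:
  assumes "\<bar>m\<bar> \<le> 1"
  shows "\<bar>(cosh (m0 + m))\<^sup>2 - ch0\<^sup>2\<bar> \<le> 6 * M\<^sup>2 * \<bar>m\<bar>"
proof -
  have "\<bar>cosh (m0 + m) + ch0\<bar> \<le> 2 * M"
    using coordinate_bounds(3)[OF assms] ch0_le_M cosh_real_ge_1[of "m0 + m"] ch0_gt_1 by simp
  then have "\<bar>(cosh (m0 + m) - ch0) * (cosh (m0 + m) + ch0)\<bar> \<le> (3 * M * \<bar>m\<bar>) * (2 * M)"
    using abs_cosh_m0_add_diff_le[OF assms] by (intro abs_mult_le_mult)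
  then show ?thesis by (simp add: algebra_simps power2_eq_square)
qed

lemma abs_cosh_sinh_m0_add_diff_le:
  assumes "\<bar>m\<bar> \<le> 1"
  shows "\<bar>cosh (m0 + m) * sinh (m0 + m) - ch0 * sh0\<bar> \<le> 6 * M\<^sup>2 * \<bar>m\<bar>"
proof -
  have "\<bar>(cosh (m0 + m) - ch0) * sinh (m0 + m)\<bar> \<le> (3 * M * \<bar>m\<bar>) * M"
    using abs_cosh_m0_add_diff_le[OF assms] coordinate_bounds(4)[OF assms] by (intro abs_mult_le_mult)
  moreover have "\<bar>ch0 * (sinh (m0 + m) - sh0)\<bar> \<le> M * (3 * M * \<bar>m\<bar>)"
    using abs_sinh_m0_add_diff_le[OF assms] ch0_le_M ch0_gt_1 by (intro abs_mult_le_mult) auto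
  moreover have "cosh (m0 + m) * sinh (m0 + m) - ch0 * sh0
      = (cosh (m0 + m) - ch0) * sinh (m0 + m) + ch0 * (sinh (m0 + m) - sh0)"
    by (simp add: algebra_simps)
  ultimately show ?thesis
    using abs_triangle_ineq[of "(cosh (m0 + m) - ch0) * sinh (m0 + m)" "ch0 * (sinh (m0 + m) - sh0)"]
    by (simp add: algebra_simps power2_eq_square)
qed

lemma r0_pos: "0 < r0" and r0_le_1: "r0 \<le> 1" and r0_le_half_m0: "r0 \<le> m0 / 2"
  using m0_pos by (simp_all add: r0_def)

lemma lb_pos: "0 < lb"
proof -
  have "ch0 < cosh (m0 + r0)"
    unfolding ch0_def using m0_pos r0_pos by (intro cosh_real_strict_mono) auto
  then have "(ch0 / cosh (m0 + r0))\<^sup>2 < 1" using ch0_gt_1 by (simp add: power_less_one_iff)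
  moreover have "cosh (m0 - r0) < ch0"
    unfolding ch0_def using m0_pos r0_pos r0_le_half_m0 by (intro cosh_real_strict_mono) auto
  then have "(cosh (m0 - r0))\<^sup>2 < ch0\<^sup>2"
    using cosh_real_ge_1[of "m0 - r0"] by (intro power_strict_mono) auto
  ultimately show ?thesis unfolding lb_def using e0_pos m0_pos by simp
qed

lemma lb_le_1: "lb \<le> 1"
  and lb_le_outer: "lb \<le> e0\<^sup>2 * (1 - (ch0 / cosh (m0 + r0))\<^sup>2)"
  and lb_le_inner: "lb \<le> e0\<^sup>2 * (ch0\<^sup>2 - (cosh (m0 - r0))\<^sup>2)"
  and lb_le_slope: "lb \<le> e0\<^sup>2 * sinh (m0 / 2)"
  unfolding lb_def by linarith+

lemma eps0_pos: "0 < eps0"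
  using lb_pos one_le_M by (simp add: eps0_def)

lemma one_le_M3_div_lb: "1 \<le> M ^ 3 / lb"
proof -
  have "1 \<le> M ^ 3" using one_le_M by simp
  then show ?thesis using lb_pos lb_le_1 by (simp add: field_simps)
qed

lemma K_error_nonneg: "0 \<le> K_error"
  by (simp add: K_error_def)

lemma K_param_nonneg: "0 \<le> K_param"
  unfolding K_param_def al0_def ga0_def using c_pos ch0_gt_1 sh0_pos by simp

definition ex :: "real \<Rightarrow> real \<Rightarrow> real" where "ex \<phi> m = c * cosh (m0 + m) * cos \<phi>"

definition ey :: "real \<Rightarrow> real \<Rightarrow> real" where "ey \<phi> m = c * sinh (m0 + m) * sin \<phi>"

lemma reference_conic_eq: "al0 * (ex \<phi> m)\<^sup>2 + ga0 * (ey \<phi> m)\<^sup>2 - 1 = ((cosh (m0 + m))\<^sup>2 - ch0\<^sup>2) * w \<phi>"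
proof -
  have w: "w \<phi> * (ch0\<^sup>2 * sh0\<^sup>2) = (cos \<phi>)\<^sup>2 * sh0\<^sup>2 + (sin \<phi>)\<^sup>2 * ch0\<^sup>2"
    using ch0_gt_1 sh0_pos by (simp add: w_def field_simps)
  have "(sinh (m0 + m))\<^sup>2 = (cosh (m0 + m))\<^sup>2 - 1" "(sin \<phi>)\<^sup>2 = 1 - (cos \<phi>)\<^sup>2"
    by (simp_all add: cosh_square_eq sin_squared_eq)
  then have "(al0 * (ex \<phi> m)\<^sup>2 + ga0 * (ey \<phi> m)\<^sup>2 - 1) * (ch0\<^sup>2 * sh0\<^sup>2)
      = ((cosh (m0 + m))\<^sup>2 - ch0\<^sup>2) * (w \<phi> * (ch0\<^sup>2 * sh0\<^sup>2))"
    unfolding w ex_def ey_def using al0_mult ga0_mult ch0_sq by algebra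
  then show ?thesis using ch0_gt_1 sh0_pos by simp
qed

lemma scaled_cosh_bound: "\<bar>m\<bar> \<le> 1 \<Longrightarrow> \<bar>s\<bar> \<le> 1 \<Longrightarrow> \<bar>c * cosh (m0 + m) * s\<bar> + 1 \<le> M"
proof -
  assume m: "\<bar>m\<bar> \<le> 1" and s: "\<bar>s\<bar> \<le> 1"
  have "\<bar>c * cosh (m0 + m)\<bar> \<le> c * cosh (m0 + m)" using c_pos by simp
  from abs_mult_le_mult[OF this s] coordinate_bounds(1)[OF m] show ?thesis by simp
qed

lemma scaled_sinh_bound: "\<bar>m\<bar> \<le> 1 \<Longrightarrow> \<bar>s\<bar> \<le> 1 \<Longrightarrow> \<bar>c * sinh (m0 + m) * s\<bar> + 1 \<le> M"
proof -
  assume m: "\<bar>m\<bar> \<le> 1" and s: "\<bar>s\<bar> \<le> 1"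
  have "\<bar>c * sinh (m0 + m)\<bar> \<le> c * \<bar>sinh (m0 + m)\<bar>" using c_pos by (simp add: abs_mult)
  from abs_mult_le_mult[OF this s] coordinate_bounds(2)[OF m] show ?thesis by simp
qed

lemma abs_scaled_cosh_diff_le:
  "\<bar>m\<bar> \<le> 1 \<Longrightarrow> \<bar>s\<bar> \<le> 1 \<Longrightarrow> \<bar>c * (cosh (m0 + m) - ch0) * s\<bar> \<le> 3 * M\<^sup>2 * \<bar>m\<bar>"
  using abs_mult_le_mult[OF abs_mult_le_mult[OF _ abs_cosh_m0_add_diff_le] , of c M m s 1] c_pos c_le_M
  by (simp add: power2_eq_square algebra_simps)

lemma abs_scaled_sinh_diff_le:
  "\<bar>m\<bar> \<le> 1 \<Longrightarrow> \<bar>s\<bar> \<le> 1 \<Longrightarrow> \<bar>c * (sinh (m0 + m) - sh0) * s\<bar> \<le> 3 * M\<^sup>2 * \<bar>m\<bar>"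
  using abs_mult_le_mult[OF abs_mult_le_mult[OF _ abs_sinh_m0_add_diff_le] , of c M m s 1] c_pos c_le_M
  by (simp add: power2_eq_square algebra_simps)

lemma ex_diff_eq: "ex \<phi> m - ex \<phi> 0 = c * (cosh (m0 + m) - ch0) * cos \<phi>"
  and ey_diff_eq: "ey \<phi> m - ey \<phi> 0 = c * (sinh (m0 + m) - sh0) * sin \<phi>"
  unfolding ex_def ey_def ch0_def sh0_def by (simp_all add: algebra_simps)

lemma cos_sq_less_ch0_sq: "(cos \<phi>)\<^sup>2 < ch0\<^sup>2"
proof -
  have "(cos \<phi>)\<^sup>2 \<le> 1" by (simp add: abs_square_le_1)
  moreover have "1 < ch0\<^sup>2" using ch0_gt_1 one_less_power[of ch0 2] by simp
  ultimately show ?thesis by linarith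
qed

lemma e_h_eq: "e_h e0 \<phi> = ch0\<^sup>2 / (ch0\<^sup>2 - (cos \<phi>)\<^sup>2)"
proof -
  note cos_sq_less_ch0_sq[of \<phi>]
  then show ?thesis unfolding e_h_def using e0_pos by (simp add: ch0_eq field_simps power_divide)
qed

lemma one_le_e_h: "1 \<le> e_h e0 \<phi>"
  using cos_sq_less_ch0_sq[of \<phi>] unfolding e_h_eq by simp

lemma elliptic_motions_eq:
  "a0 * e_h e0 \<phi> + a1 * e_tau1 e0 \<phi> + b1 * e_tau2 e0 \<phi> + a2 * e_hr e0 \<phi> + b2 * e_r e0 \<phi>
     = (a0 + a1 * cos \<phi> + b1 * sin \<phi> + a2 * cos (2 * \<phi>) + b2 * sin (2 * \<phi>)) * e_h e0 \<phi>"
  unfolding e_tau1_def e_tau2_def e_hr_def e_r_def by (simp add: algebra_simps)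

lemma g_mult_e_h: "2 * ch0 * sh0 * w \<phi> * e_h e0 \<phi> = 2 * ch0 / sh0"
proof -
  have "w \<phi> * (ch0\<^sup>2 * sh0\<^sup>2) = (cos \<phi>)\<^sup>2 * sh0\<^sup>2 + (sin \<phi>)\<^sup>2 * ch0\<^sup>2"
    unfolding w_def using ch0_gt_1 sh0_pos by (simp add: field_simps)
  also have "\<dots> = ch0\<^sup>2 - (cos \<phi>)\<^sup>2" unfolding sin_squared_eq ch0_sq by (simp add: algebra_simps)
  finally have "w \<phi> = (ch0\<^sup>2 - (cos \<phi>)\<^sup>2) / (ch0\<^sup>2 * sh0\<^sup>2)"
    using ch0_gt_1 sh0_pos by (simp add: field_simps)
  moreover have "2 * ch0 * sh0 * (d / (ch0\<^sup>2 * sh0\<^sup>2)) * (ch0\<^sup>2 / d) = 2 * ch0 / sh0" if "d \<noteq> 0" for d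
    using that ch0_gt_1 sh0_pos by (simp add: field_simps power2_eq_square)
  moreover have "ch0\<^sup>2 - (cos \<phi>)\<^sup>2 \<noteq> 0" using cos_sq_less_ch0_sq[of \<phi>] by simp
  ultimately show ?thesis unfolding e_h_eq by simp
qed

lemma perturbation_size_le:
  "\<bar>- 2 * ch0 / sh0 * al0 * (a0 + a2)\<bar> + \<bar>- 2 * ga0 * b2\<bar> + \<bar>- 2 * ch0 / sh0 * ga0 * (a0 - a2)\<bar>
     + \<bar>a1 * c * ch0\<^sup>2 / sh0\<bar> + \<bar>b1 * c * ch0\<bar> \<le> K_param * (\<bar>a0\<bar> + \<bar>a1\<bar> + \<bar>b1\<bar> + \<bar>a2\<bar> + \<bar>b2\<bar>)"
proof -
  define S where "S = \<bar>a0\<bar> + \<bar>a1\<bar> + \<bar>b1\<bar> + \<bar>a2\<bar> + \<bar>b2\<bar>"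
  have pos: "0 \<le> 2 * ch0 / sh0" "0 \<le> al0" "0 \<le> ga0" "0 \<le> c * ch0\<^sup>2 / sh0" "0 \<le> c * ch0"
    unfolding al0_def ga0_def using c_pos ch0_gt_1 sh0_pos by simp_all
  have "\<bar>a0 + a2\<bar> \<le> S" "\<bar>a0 - a2\<bar> \<le> S" "\<bar>a1\<bar> \<le> S" "\<bar>b1\<bar> \<le> S" "\<bar>b2\<bar> \<le> S"
    unfolding S_def by (simp_all add: abs_le_iff) (auto simp: abs_if)
  then have "\<bar>- 2 * ch0 / sh0 * al0 * (a0 + a2)\<bar> \<le> 2 * ch0 / sh0 * al0 * S"
    "\<bar>- 2 * ga0 * b2\<bar> \<le> 2 * ga0 * S"
    "\<bar>- 2 * ch0 / sh0 * ga0 * (a0 - a2)\<bar> \<le> 2 * ch0 / sh0 * ga0 * S"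
    "\<bar>a1 * c * ch0\<^sup>2 / sh0\<bar> \<le> c * ch0\<^sup>2 / sh0 * S" "\<bar>b1 * c * ch0\<bar> \<le> c * ch0 * S"
    using pos c_pos ch0_gt_1 sh0_pos
    by (auto simp: abs_mult abs_divide intro!: mult_left_mono mult_right_mono divide_right_mono)
  moreover have "K_param * S = 2 * ch0 / sh0 * al0 * S + 2 * ga0 * S + 2 * ch0 / sh0 * ga0 * S
      + c * ch0\<^sup>2 / sh0 * S + c * ch0 * S" unfolding K_param_def by (simp add: algebra_simps add_divide_distrib)
  ultimately show ?thesis unfolding S_def[symmetric] by linarith
qed

end

section \<open>The perturbed conic\<close>

locale perturbed_conic = confocal_ellipse +
  fixes p q r x0 y0 t :: real
  assumes abs_p_le: "\<bar>p\<bar> \<le> t" and abs_q_le: "\<bar>q\<bar> \<le> t" and abs_r_le: "\<bar>r\<bar> \<le> t"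
    and abs_x0_le: "\<bar>x0\<bar> \<le> t" and abs_y0_le: "\<bar>y0\<bar> \<le> t" and t_le_eps0: "t \<le> eps0"
begin

lemma t_nonneg: "0 \<le> t"
  using abs_p_le by linarith

lemma t_small: "32 * M ^ 4 * t \<le> lb"
  using t_le_eps0 one_le_M by (simp add: eps0_def field_simps)

lemma t_le_1: "t \<le> 1"
proof -
  have "1 \<le> M ^ 4" using one_le_M by simp
  then have "t \<le> M ^ 4 * t" using t_nonneg by (simp add: mult_le_cancel_right1)
  then show ?thesis using t_small lb_le_1 by linarith
qed

text \<open>The equation of the perturbed conic (\<open>G_eq_conic\<close>), split into the reference part and the
  perturbation \<open>P\<close>; the suffixes \<open>m\<close> and \<open>phi\<close> mark partial derivatives.\<close>

definition P :: "real \<Rightarrow> real \<Rightarrow> real" where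
  "P \<phi> m = qform p q r (ex \<phi> m - x0) (ey \<phi> m - y0) (ex \<phi> m - x0) (ey \<phi> m - y0)
     - 2 * al0 * ex \<phi> m * x0 - 2 * ga0 * ey \<phi> m * y0 + al0 * x0\<^sup>2 + ga0 * y0\<^sup>2"

definition Pm :: "real \<Rightarrow> real \<Rightarrow> real" where
  "Pm \<phi> m = 2 * qform p q r (ex \<phi> m - x0) (ey \<phi> m - y0) (c * sinh (m0 + m) * cos \<phi>) (c * cosh (m0 + m) * sin \<phi>)
     - 2 * al0 * (c * sinh (m0 + m) * cos \<phi>) * x0 - 2 * ga0 * (c * cosh (m0 + m) * sin \<phi>) * y0"

definition Pphi :: "real \<Rightarrow> real \<Rightarrow> real" where
  "Pphi \<phi> m = 2 * qform p q r (ex \<phi> m - x0) (ey \<phi> m - y0) (- c * cosh (m0 + m) * sin \<phi>) (c * sinh (m0 + m) * cos \<phi>)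
     - 2 * al0 * (- c * cosh (m0 + m) * sin \<phi>) * x0 - 2 * ga0 * (c * sinh (m0 + m) * cos \<phi>) * y0"

definition G :: "real \<Rightarrow> real \<Rightarrow> real" where
  "G \<phi> m = ((cosh (m0 + m))\<^sup>2 - ch0\<^sup>2) * w \<phi> + P \<phi> m"

definition Gm :: "real \<Rightarrow> real \<Rightarrow> real" where
  "Gm \<phi> m = 2 * cosh (m0 + m) * sinh (m0 + m) * w \<phi> + Pm \<phi> m"

definition Gphi :: "real \<Rightarrow> real \<Rightarrow> real" where
  "Gphi \<phi> m = ((cosh (m0 + m))\<^sup>2 - ch0\<^sup>2) * dw \<phi> + Pphi \<phi> m"

lemma G_eq_conic:
  "G \<phi> m = (al0 + p) * (ex \<phi> m - x0)\<^sup>2 + 2 * q * (ex \<phi> m - x0) * (ey \<phi> m - y0)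
     + (ga0 + r) * (ey \<phi> m - y0)\<^sup>2 - 1"
  using reference_conic_eq[of \<phi> m] unfolding G_def P_def qform_def
  by (simp add: algebra_simps power2_eq_square)

lemma G_has_derivative_m: "((\<lambda>m. G \<phi> m) has_real_derivative Gm \<phi> m) (at m)"
  unfolding G_def Gm_def P_def Pm_def qform_def ex_def ey_def
  by (auto intro!: derivative_eq_intros simp: algebra_simps power2_eq_square)

lemma G_has_derivative_phi: "((\<lambda>\<phi>. G \<phi> m) has_real_derivative Gphi \<phi> m) (at \<phi>)"
  unfolding G_def Gphi_def P_def Pphi_def qform_def ex_def ey_def
  by (auto intro!: derivative_eq_intros w_has_derivative simp: algebra_simps power2_eq_square)

lemma continuous_Gm: "continuous_on UNIV (case_prod Gm)"
  unfolding Gm_def Pm_def qform_def ex_def ey_def w_def case_prod_unfold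
  using ch0_gt_1 sh0_pos by (intro continuous_intros) auto

lemma continuous_Gphi: "continuous_on UNIV (case_prod Gphi)"
  unfolding Gphi_def Pphi_def qform_def ex_def ey_def dw_def case_prod_unfold
  by (intro continuous_intros)

lemma abs_P_le: "\<bar>P \<phi> m\<bar> \<le> 20 * M\<^sup>2 * t * (cosh (m0 + m))\<^sup>2"
proof -
  define C where "C = cosh (m0 + m)"
  have C1: "1 \<le> C" unfolding C_def by (rule cosh_real_ge_1)
  have "\<bar>c * cosh (m0 + m)\<bar> \<le> c * C" "\<bar>c * sinh (m0 + m)\<bar> \<le> c * C"
    unfolding C_def using c_pos abs_sinh_le_cosh[of "m0 + m"] by (simp_all add: abs_mult)
  from this[THEN abs_mult_le_mult, OF abs_cos_le_one] this[THEN abs_mult_le_mult, OF abs_sin_le_one]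
  have ex: "\<bar>ex \<phi> m\<bar> \<le> c * C" and ey: "\<bar>ey \<phi> m\<bar> \<le> c * C"
    unfolding ex_def ey_def by simp_all
  have "(c + 1) * C \<le> M * C" using c_plus_1_le_M C1 by (intro mult_right_mono) auto
  then have "c * C + t \<le> M * C" using C1 t_le_1 by (simp add: distrib_right)
  then have "\<bar>ex \<phi> m - x0\<bar> \<le> 2 * M * C" "\<bar>ey \<phi> m - y0\<bar> \<le> 2 * M * C"
    "\<bar>2 * ex \<phi> m - x0\<bar> \<le> 2 * M * C" "\<bar>2 * ey \<phi> m - y0\<bar> \<le> 2 * M * C"
    using ex ey abs_x0_le abs_y0_le t_nonneg by linarith+
  then have "\<bar>2 * qform p q r (ex \<phi> m - x0) (ey \<phi> m - y0) (ex \<phi> m - x0) (ey \<phi> m - y0)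
      - 2 * al0 * (2 * ex \<phi> m - x0) * x0 - 2 * ga0 * (2 * ey \<phi> m - y0) * y0\<bar>
      \<le> 4 * (2 * (2 * M * C) + M) * (2 * M * C) * t"
    using abs_p_le abs_q_le abs_r_le abs_x0_le abs_y0_le abs_al0_le abs_ga0_le
    by (intro abs_qform_linear_le)
  moreover have "2 * qform p q r (ex \<phi> m - x0) (ey \<phi> m - y0) (ex \<phi> m - x0) (ey \<phi> m - y0)
      - 2 * al0 * (2 * ex \<phi> m - x0) * x0 - 2 * ga0 * (2 * ey \<phi> m - y0) * y0 = 2 * P \<phi> m"
    unfolding P_def by (simp add: algebra_simps power2_eq_square)
  ultimately have "\<bar>2 * P \<phi> m\<bar> \<le> 4 * (2 * (2 * M * C) + M) * (2 * M * C) * t" by simp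
  also have "\<dots> \<le> 4 * (5 * (M * C)) * (2 * M * C) * t"
  proof -
    have "M \<le> M * C" using C1 one_le_M by simp
    then have "2 * (2 * M * C) + M \<le> 5 * (M * C)" by linarith
    then show ?thesis using C1 one_le_M t_nonneg by (intro mult_right_mono mult_left_mono) auto
  qed
  also have "\<dots> = 2 * (20 * M\<^sup>2 * t * C\<^sup>2)" by algebra
  finally show ?thesis unfolding C_def by simp
qed

lemma abs_Pm_le:
  assumes "\<bar>m\<bar> \<le> 1"
  shows "\<bar>Pm \<phi> m\<bar> \<le> 12 * M\<^sup>2 * t"
proof -
  have X: "\<bar>ex \<phi> m - x0\<bar> \<le> M" and Y: "\<bar>ey \<phi> m - y0\<bar> \<le> M"
    using scaled_cosh_bound[OF assms abs_cos_le_one[of \<phi>]] scaled_sinh_bound[OF assms abs_sin_le_one[of \<phi>]]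
      abs_triangle_ineq4[of "ex \<phi> m" x0] abs_triangle_ineq4[of "ey \<phi> m" y0] abs_x0_le abs_y0_le t_le_1
    unfolding ex_def ey_def by linarith+
  have U: "\<bar>c * sinh (m0 + m) * cos \<phi>\<bar> \<le> M" and V: "\<bar>c * cosh (m0 + m) * sin \<phi>\<bar> \<le> M"
    using scaled_sinh_bound[OF assms abs_cos_le_one[of \<phi>]] scaled_cosh_bound[OF assms abs_sin_le_one[of \<phi>]]
    by linarith+
  have "\<bar>Pm \<phi> m\<bar> \<le> 4 * (2 * M + M) * M * t"
    unfolding Pm_def using abs_p_le abs_q_le abs_r_le abs_x0_le abs_y0_le abs_al0_le abs_ga0_le X Y U V U V
    by (rule abs_qform_linear_le)
  then show ?thesis by (simp add: power2_eq_square)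
qed

lemma abs_Pphi_le:
  assumes "\<bar>m\<bar> \<le> 1"
  shows "\<bar>Pphi \<phi> m\<bar> \<le> 12 * M\<^sup>2 * t"
proof -
  have X: "\<bar>ex \<phi> m - x0\<bar> \<le> M" and Y: "\<bar>ey \<phi> m - y0\<bar> \<le> M"
    using scaled_cosh_bound[OF assms abs_cos_le_one[of \<phi>]] scaled_sinh_bound[OF assms abs_sin_le_one[of \<phi>]]
      abs_triangle_ineq4[of "ex \<phi> m" x0] abs_triangle_ineq4[of "ey \<phi> m" y0] abs_x0_le abs_y0_le t_le_1
    unfolding ex_def ey_def by linarith+
  have U: "\<bar>- c * cosh (m0 + m) * sin \<phi>\<bar> \<le> M" and V: "\<bar>c * sinh (m0 + m) * cos \<phi>\<bar> \<le> M"
    using scaled_cosh_bound[OF assms abs_sin_le_one[of \<phi>]] scaled_sinh_bound[OF assms abs_cos_le_one[of \<phi>]]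
    by (simp_all add: abs_mult)
  have "\<bar>Pphi \<phi> m\<bar> \<le> 4 * (2 * M + M) * M * t"
    unfolding Pphi_def using abs_p_le abs_q_le abs_r_le abs_x0_le abs_y0_le abs_al0_le abs_ga0_le X Y U V U V
    by (rule abs_qform_linear_le)
  then show ?thesis by (simp add: power2_eq_square)
qed

lemma G_pos:
  assumes "r0 \<le> m"
  shows "0 < G \<phi> m"
proof -
  define C where "C = cosh (m0 + m)"
  have C1: "1 \<le> C" unfolding C_def by (rule cosh_real_ge_1)
  have "cosh (m0 + r0) \<le> C"
    unfolding C_def using assms m0_pos r0_pos by (subst cosh_real_nonneg_le_iff) auto
  then have "(ch0 / C)\<^sup>2 \<le> (ch0 / cosh (m0 + r0))\<^sup>2"
    using ch0_gt_1 cosh_real_ge_1[of "m0 + r0"] by (intro power_mono divide_left_mono) auto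
  then have "lb * C\<^sup>2 \<le> e0\<^sup>2 * (1 - (ch0 / C)\<^sup>2) * C\<^sup>2"
    using lb_le_outer e0_pos by (intro mult_right_mono) (auto intro: order_trans)
  also have "\<dots> = (C\<^sup>2 - ch0\<^sup>2) * e0\<^sup>2" using C1 by (simp add: power_divide field_simps)
  also have "\<dots> \<le> (C\<^sup>2 - ch0\<^sup>2) * w \<phi>"
  proof (rule mult_left_mono[OF e0_sq_le_w])
    have "ch0 \<le> C" unfolding C_def ch0_def using assms m0_pos r0_pos by (subst cosh_real_nonneg_le_iff) auto
    then show "0 \<le> C\<^sup>2 - ch0\<^sup>2" using ch0_gt_1 by (simp add: power_mono)
  qed
  finally have base: "lb * C\<^sup>2 \<le> (C\<^sup>2 - ch0\<^sup>2) * w \<phi>" .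
  have "20 * M\<^sup>2 * t < lb"
  proof -
    have "M\<^sup>2 \<le> M ^ 4" using one_le_M by (simp add: power_increasing)
    then have "20 * M\<^sup>2 * t \<le> 20 * M ^ 4 * t" using t_nonneg by (simp add: mult_right_mono)
    then show ?thesis using t_small lb_pos t_nonneg one_le_M by linarith
  qed
  then have "20 * M\<^sup>2 * t * C\<^sup>2 < lb * C\<^sup>2" using C1 by (intro mult_strict_right_mono) auto
  moreover have "- P \<phi> m \<le> 20 * M\<^sup>2 * t * C\<^sup>2" using abs_P_le[of \<phi> m] unfolding C_def by linarith
  ultimately show ?thesis using base unfolding G_def C_def by linarith
qed

lemma G_neg:
  assumes "- m0 \<le> m" "m \<le> - r0"
  shows "G \<phi> m < 0"
proof -
  define C where "C = cosh (m0 + m)"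
  have C1: "1 \<le> C" unfolding C_def by (rule cosh_real_ge_1)
  have "C \<le> cosh (m0 - r0)"
    unfolding C_def using assms m0_pos r0_pos r0_le_half_m0 by (subst cosh_real_nonneg_le_iff) auto
  moreover have "cosh (m0 - r0) \<le> ch0"
    unfolding ch0_def using m0_pos r0_pos r0_le_half_m0 by (subst cosh_real_nonneg_le_iff) auto
  ultimately have C_le: "C\<^sup>2 \<le> (cosh (m0 - r0))\<^sup>2" "C\<^sup>2 \<le> ch0\<^sup>2"
    using C1 by (auto intro: power_mono)
  have "(C\<^sup>2 - ch0\<^sup>2) * w \<phi> \<le> (C\<^sup>2 - ch0\<^sup>2) * e0\<^sup>2"
    using C_le e0_sq_le_w by (intro mult_left_mono_neg) auto
  also have "\<dots> \<le> ((cosh (m0 - r0))\<^sup>2 - ch0\<^sup>2) * e0\<^sup>2" using C_le by (intro mult_right_mono) auto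
  also have "\<dots> \<le> - lb" using lb_le_inner by (simp add: algebra_simps)
  finally have base: "(C\<^sup>2 - ch0\<^sup>2) * w \<phi> \<le> - lb" .
  have "20 * M\<^sup>2 * t * C\<^sup>2 \<le> 20 * M\<^sup>2 * t * M\<^sup>2"
    using C_le ch0_le_M ch0_gt_1 t_nonneg
    by (intro mult_left_mono) (auto intro: order_trans power_mono)
  also have "\<dots> = 20 * M ^ 4 * t" by (simp add: power2_eq_square power4_eq_xxxx)
  also have "\<dots> < lb" using t_small lb_pos t_nonneg one_le_M by simp
  finally have "P \<phi> m < lb" using abs_P_le[of \<phi> m] unfolding C_def by linarith
  then show ?thesis using base unfolding G_def C_def by linarith
qed

lemma Gm_ge_lb:
  assumes "\<bar>m\<bar> \<le> r0"
  shows "lb \<le> Gm \<phi> m"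
proof -
  have "sinh (m0 / 2) \<le> sinh (m0 + m)" using assms r0_le_half_m0 by simp
  moreover have "0 < sinh (m0 / 2)" using m0_pos by simp
  ultimately have "1 * sinh (m0 / 2) * e0\<^sup>2 \<le> cosh (m0 + m) * sinh (m0 + m) * w \<phi>"
    using e0_sq_le_w cosh_real_ge_1[of "m0 + m"] by (intro mult_mono) auto
  then have slope: "2 * lb \<le> 2 * cosh (m0 + m) * sinh (m0 + m) * w \<phi>"
    using lb_le_slope by (simp add: mult.commute)
  have "M\<^sup>2 * t \<le> M ^ 4 * t" using M_sq_le_M4 t_nonneg by (rule mult_right_mono)
  moreover have "0 \<le> M ^ 4 * t" using t_nonneg by simp
  ultimately have "12 * M\<^sup>2 * t \<le> lb" using t_small by linarith
  with slope show ?thesis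
    using abs_Pm_le[of m \<phi>] assms r0_le_1 unfolding Gm_def by (simp add: abs_le_iff)
qed

lemma abs_Gphi_le:
  assumes "\<bar>m\<bar> \<le> 1"
  shows "\<bar>Gphi \<phi> m\<bar> \<le> 12 * M ^ 3 * (\<bar>m\<bar> + t)"
proof -
  have "\<bar>((cosh (m0 + m))\<^sup>2 - ch0\<^sup>2) * dw \<phi>\<bar> \<le> 6 * M\<^sup>2 * \<bar>m\<bar> * M"
    using abs_cosh_sq_m0_add_diff_le[OF assms] abs_dw_le_M by (rule abs_mult_le_mult)
  moreover have "12 * M\<^sup>2 * t \<le> 12 * M ^ 3 * t"
    using one_le_M t_nonneg by (intro mult_right_mono) (auto simp: power_increasing)
  moreover have "6 * M\<^sup>2 * \<bar>m\<bar> * M \<le> 12 * M ^ 3 * \<bar>m\<bar>"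
    using one_le_M by (simp add: power2_eq_square power3_eq_cube mult_right_mono)
  ultimately show ?thesis
    using abs_Pphi_le[OF assms, of \<phi>]
      abs_triangle_ineq[of "((cosh (m0 + m))\<^sup>2 - ch0\<^sup>2) * dw \<phi>" "Pphi \<phi> m"]
    unfolding Gphi_def by (simp add: algebra_simps)
qed

sublocale band_implicit G Gphi Gm r0 lb "24 * M ^ 3"
proof
  fix \<phi> m :: real
  show "((\<lambda>\<phi>. G \<phi> m) has_real_derivative Gphi \<phi> m) (at \<phi>)" by (rule G_has_derivative_phi)
  show "((\<lambda>m. G \<phi> m) has_real_derivative Gm \<phi> m) (at m)" by (rule G_has_derivative_m)
  show "G \<phi> (- r0) < 0" using r0_pos r0_le_half_m0 by (intro G_neg) auto
  show "0 < G \<phi> r0" by (rule G_pos) simp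
  assume m: "\<bar>m\<bar> \<le> r0"
  then show "lb \<le> Gm \<phi> m" by (rule Gm_ge_lb)
  have "\<bar>m\<bar> + t \<le> 2" using m r0_le_1 t_le_1 by linarith
  then have "12 * M ^ 3 * (\<bar>m\<bar> + t) \<le> 12 * M ^ 3 * 2" using one_le_M by (intro mult_left_mono) auto
  with abs_Gphi_le[OF order_trans[OF m r0_le_1], of \<phi>] show "\<bar>Gphi \<phi> m\<bar> \<le> 24 * M ^ 3"
    by linarith
qed (use continuous_Gphi continuous_Gm r0_pos lb_pos in auto)

abbreviation nu :: "real \<Rightarrow> real" where "nu \<equiv> implicit_fn"

lemma G_zero_imp_eq_nu:
  assumes "- m0 \<le> m" "G \<phi> m = 0"
  shows "m = nu \<phi>"
proof (rule implicit_fn_unique)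
  show "\<bar>m\<bar> \<le> r0" using G_pos[of m \<phi>] G_neg[of m \<phi>] assms by (cases "r0 \<le> m"; force)
qed fact

lemma nu_periodic: "nu (\<phi> + 2 * pi) = nu \<phi>"
proof -
  have "G (\<phi> + 2 * pi) m = G \<phi> m" for m
    by (simp add: G_def P_def ex_def ey_def w_def)
  then have "G (\<phi> + 2 * pi) (nu \<phi>) = 0" using G_implicit_fn[of \<phi>] by simp
  from implicit_fn_unique[OF abs_implicit_fn_le this] show ?thesis by simp
qed

lemma C1_periodic_nu: "C1_periodic nu"
proof -
  have deriv_nu: "deriv nu = (\<lambda>\<phi>. - Gphi \<phi> (nu \<phi>) / Gm \<phi> (nu \<phi>))"
    using implicit_fn_has_derivative by (intro ext DERIV_imp_deriv)
  show ?thesis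
    unfolding C1_periodic_def deriv_nu
    using implicit_fn_has_derivative isCont_implicit_fn_derivative nu_periodic
    by (auto simp: real_differentiable_def intro!: continuous_at_imp_continuous_on)
qed

lemma abs_nu_le: "\<bar>nu \<phi>\<bar> \<le> 20 * M ^ 4 / lb * t"
proof -
  have "lb * \<bar>nu \<phi>\<bar> \<le> \<bar>P \<phi> 0\<bar>"
    using gamma_dist_implicit_fn_le[of 0 \<phi>] r0_pos by (simp add: G_def ch0_def)
  also have "\<dots> \<le> 20 * M\<^sup>2 * t * ch0\<^sup>2" using abs_P_le[of \<phi> 0] by (simp add: ch0_def)
  also have "\<dots> \<le> 20 * M\<^sup>2 * t * M\<^sup>2"
    using ch0_le_M ch0_gt_1 t_nonneg by (intro mult_left_mono power_mono) auto
  also have "\<dots> = 20 * M ^ 4 * t" by (simp add: power2_eq_square power4_eq_xxxx)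
  finally show ?thesis using lb_pos by (simp add: field_simps)
qed

lemma perturbed_curve_eq_conic:
  "perturbed_curve e0 c nu =
     {(x, y). (al0 + p) * (x - x0)\<^sup>2 + 2 * q * (x - x0) * (y - y0) + (ga0 + r) * (y - y0)\<^sup>2 = 1}"
proof (intro set_eqI iffI)
  fix z assume "z \<in> perturbed_curve e0 c nu"
  then obtain \<phi> where "z = (ex \<phi> (nu \<phi>), ey \<phi> (nu \<phi>))"
    unfolding perturbed_curve_def ex_def ey_def m0_def by blast
  then show "z \<in> {(x, y). (al0 + p) * (x - x0)\<^sup>2 + 2 * q * (x - x0) * (y - y0) + (ga0 + r) * (y - y0)\<^sup>2 = 1}"
    using G_implicit_fn[of \<phi>] by (simp add: G_eq_conic)
next
  fix z assume "z \<in> {(x, y). (al0 + p) * (x - x0)\<^sup>2 + 2 * q * (x - x0) * (y - y0) + (ga0 + r) * (y - y0)\<^sup>2 = 1}"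
  then obtain x y where z: "z = (x, y)"
    and conic: "(al0 + p) * (x - x0)\<^sup>2 + 2 * q * (x - x0) * (y - y0) + (ga0 + r) * (y - y0)\<^sup>2 = 1" by auto
  obtain \<mu> \<phi> where \<mu>: "0 \<le> \<mu>" "x = c * cosh \<mu> * cos \<phi>" "y = c * sinh \<mu> * sin \<phi>"
    using elliptic_coordinates_exist[OF c_pos] .
  then have "G \<phi> (\<mu> - m0) = 0" using conic by (simp add: G_eq_conic ex_def ey_def)
  then have "\<mu> - m0 = nu \<phi>" using \<mu>(1) by (intro G_zero_imp_eq_nu) auto
  then show "z \<in> perturbed_curve e0 c nu"
    unfolding perturbed_curve_def z \<mu> m0_def[symmetric] by (auto intro!: image_eqI[of _ _ \<phi>])
qed

lemma is_ellipse_perturbed_curve: "is_ellipse (perturbed_curve e0 c nu)"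
proof -
  have "0 < 1 / M ^ 4" using one_le_M by simp
  then have al0: "0 < al0" and ga0: "0 < ga0" using inv_M4_le_al0 inv_M4_le_ga0 by linarith+
  have "t \<le> 1 / (32 * M ^ 4)"
    using t_le_eps0 lb_le_1 one_le_M unfolding eps0_def by (simp add: divide_right_mono order_trans)
  then have small: "t \<le> al0 / 32" "t \<le> ga0 / 32" using inv_M4_le_al0 inv_M4_le_ga0 by simp_all
  then have pos: "31 / 32 * al0 \<le> al0 + p" "31 / 32 * ga0 \<le> ga0 + r" using abs_p_le abs_r_le by linarith+
  have "q\<^sup>2 \<le> t * t" using power_mono[OF abs_q_le abs_ge_zero, of 2] by (simp add: power2_eq_square)
  also have "\<dots> \<le> (al0 / 32) * (ga0 / 32)" using small t_nonneg by (intro mult_mono) auto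
  also have "\<dots> < (31 / 32 * al0) * (31 / 32 * ga0)" using al0 ga0 by (intro mult_strict_mono) auto
  also have "\<dots> \<le> (al0 + p) * (ga0 + r)" using pos al0 ga0 by (intro mult_mono) auto
  finally show ?thesis
    unfolding perturbed_curve_eq_conic using pos al0 ga0
    by (intro positive_definite_conic_is_ellipse) auto
qed

section \<open>Linearization\<close>

text \<open>\<open>g \<phi> * m + L \<phi>\<close> is the part of \<open>G \<phi> m\<close> linear in \<open>m\<close> and in the parameters, so
  \<open>mu_lin\<close> solves the linearized equation; \<open>R\<close> is the remainder.\<close>

definition g :: "real \<Rightarrow> real" where "g \<phi> = 2 * ch0 * sh0 * w \<phi>"

definition dg :: "real \<Rightarrow> real" where "dg \<phi> = 2 * ch0 * sh0 * dw \<phi>"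

definition L :: "real \<Rightarrow> real" where
  "L \<phi> = qform p q r (ex \<phi> 0) (ey \<phi> 0) (ex \<phi> 0) (ey \<phi> 0) - 2 * al0 * ex \<phi> 0 * x0 - 2 * ga0 * ey \<phi> 0 * y0"

definition dL :: "real \<Rightarrow> real" where
  "dL \<phi> = 2 * qform p q r (ex \<phi> 0) (ey \<phi> 0) (- c * ch0 * sin \<phi>) (c * sh0 * cos \<phi>)
     - 2 * al0 * (- c * ch0 * sin \<phi>) * x0 - 2 * ga0 * (c * sh0 * cos \<phi>) * y0"

definition R :: "real \<Rightarrow> real \<Rightarrow> real" where "R \<phi> m = G \<phi> m - g \<phi> * m - L \<phi>"

definition Rm :: "real \<Rightarrow> real \<Rightarrow> real" where "Rm \<phi> m = Gm \<phi> m - g \<phi>"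

definition Rphi :: "real \<Rightarrow> real \<Rightarrow> real" where "Rphi \<phi> m = Gphi \<phi> m - dg \<phi> * m - dL \<phi>"

definition mu_lin :: "real \<Rightarrow> real" where "mu_lin \<phi> = - L \<phi> / g \<phi>"

definition dnu :: "real \<Rightarrow> real" where "dnu \<phi> = - Gphi \<phi> (nu \<phi>) / Gm \<phi> (nu \<phi>)"

definition d_error :: "real \<Rightarrow> real" where
  "d_error \<phi> = ((Rphi \<phi> (nu \<phi>) + Rm \<phi> (nu \<phi>) * dnu \<phi>) * g \<phi> - R \<phi> (nu \<phi>) * dg \<phi>) / (g \<phi>)\<^sup>2"

lemma g_has_derivative: "(g has_real_derivative dg \<phi>) (at \<phi>)"
  unfolding g_def dg_def by (auto intro!: derivative_eq_intros w_has_derivative)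

lemma L_has_derivative: "(L has_real_derivative dL \<phi>) (at \<phi>)"
  unfolding L_def dL_def qform_def ex_def ey_def ch0_def sh0_def
  by (auto intro!: derivative_eq_intros simp: algebra_simps)

lemma lb_le_g: "lb \<le> g \<phi>"
proof -
  have "sinh (m0 / 2) \<le> sh0" unfolding sh0_def using m0_pos by simp
  then have "1 * sinh (m0 / 2) * e0\<^sup>2 \<le> ch0 * sh0 * w \<phi>"
    using ch0_gt_1 sh0_pos m0_pos e0_sq_le_w by (intro mult_mono) auto
  then have "lb \<le> ch0 * sh0 * w \<phi>" using lb_le_slope by (simp add: mult.commute)
  then show ?thesis using lb_pos unfolding g_def by linarith
qed

lemma g_pos: "0 < g \<phi>"
  using lb_le_g lb_pos by (rule order.strict_trans2[rotated])

lemma abs_dg_le: "\<bar>dg \<phi>\<bar> \<le> 2 * M ^ 3"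
proof -
  have "\<bar>2 * ch0 * sh0\<bar> \<le> 2 * M * M"
    using ch0_le_M sh0_le_M ch0_gt_1 sh0_pos by (simp add: abs_mult mult_mono)
  from abs_mult_le_mult[OF this abs_dw_le_M[of \<phi>]] show ?thesis
    unfolding dg_def by (simp add: power3_eq_cube mult.assoc)
qed

lemma R_eq:
  "R \<phi> m = ((cosh (m0 + m))\<^sup>2 - ch0\<^sup>2 - 2 * ch0 * sh0 * m) * w \<phi>
     + (qform p q r (ex \<phi> m - x0) (ey \<phi> m - y0) (ex \<phi> m - x0) (ey \<phi> m - y0)
        - qform p q r (ex \<phi> 0) (ey \<phi> 0) (ex \<phi> 0) (ey \<phi> 0))
     - 2 * al0 * (ex \<phi> m - ex \<phi> 0) * x0 - 2 * ga0 * (ey \<phi> m - ey \<phi> 0) * y0 + al0 * x0\<^sup>2 + ga0 * y0\<^sup>2"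
  unfolding R_def G_def P_def L_def g_def by (simp add: algebra_simps)

lemma coordinate_estimates:
  assumes "\<bar>m\<bar> \<le> 1"
  shows "\<bar>ex \<phi> m - x0\<bar> \<le> M" "\<bar>ey \<phi> m - y0\<bar> \<le> M" "\<bar>ex \<phi> 0\<bar> \<le> M" "\<bar>ey \<phi> 0\<bar> \<le> M"
    "\<bar>ex \<phi> m - ex \<phi> 0\<bar> \<le> 3 * M\<^sup>2 * \<bar>m\<bar>" "\<bar>ey \<phi> m - ey \<phi> 0\<bar> \<le> 3 * M\<^sup>2 * \<bar>m\<bar>"
    "\<bar>(ex \<phi> m - x0) - ex \<phi> 0\<bar> \<le> 3 * M\<^sup>2 * (\<bar>m\<bar> + t)"
    "\<bar>(ey \<phi> m - y0) - ey \<phi> 0\<bar> \<le> 3 * M\<^sup>2 * (\<bar>m\<bar> + t)"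
proof -
  have c: "\<bar>ex \<phi> k\<bar> + 1 \<le> M" "\<bar>ey \<phi> k\<bar> + 1 \<le> M" if "\<bar>k\<bar> \<le> 1" for k
    unfolding ex_def ey_def
    using scaled_cosh_bound[OF that abs_cos_le_one] scaled_sinh_bound[OF that abs_sin_le_one] by auto
  show "\<bar>ex \<phi> m - x0\<bar> \<le> M"
    using c(1)[OF assms] abs_triangle_ineq4[of "ex \<phi> m" x0] abs_x0_le t_le_1 by linarith
  show "\<bar>ey \<phi> m - y0\<bar> \<le> M"
    using c(2)[OF assms] abs_triangle_ineq4[of "ey \<phi> m" y0] abs_y0_le t_le_1 by linarith
  show "\<bar>ex \<phi> 0\<bar> \<le> M" "\<bar>ey \<phi> 0\<bar> \<le> M" using c[of 0] by simp_all
  show dx: "\<bar>ex \<phi> m - ex \<phi> 0\<bar> \<le> 3 * M\<^sup>2 * \<bar>m\<bar>" and dy: "\<bar>ey \<phi> m - ey \<phi> 0\<bar> \<le> 3 * M\<^sup>2 * \<bar>m\<bar>"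
    unfolding ex_diff_eq ey_diff_eq
    using abs_scaled_cosh_diff_le[OF assms abs_cos_le_one] abs_scaled_sinh_diff_le[OF assms abs_sin_le_one]
    by auto
  have "1 * t \<le> 3 * M\<^sup>2 * t" using one_le_power[OF one_le_M, of 2] t_nonneg by (intro mult_right_mono) auto
  moreover have "3 * M\<^sup>2 * (\<bar>m\<bar> + t) = 3 * M\<^sup>2 * \<bar>m\<bar> + 3 * M\<^sup>2 * t" by (simp add: distrib_left)
  moreover have "\<bar>(ex \<phi> m - x0) - ex \<phi> 0\<bar> \<le> \<bar>ex \<phi> m - ex \<phi> 0\<bar> + \<bar>x0\<bar>"
    "\<bar>(ey \<phi> m - y0) - ey \<phi> 0\<bar> \<le> \<bar>ey \<phi> m - ey \<phi> 0\<bar> + \<bar>y0\<bar>"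
    using abs_triangle_ineq4[of "ex \<phi> m - ex \<phi> 0" x0] abs_triangle_ineq4[of "ey \<phi> m - ey \<phi> 0" y0]
    by (simp_all add: algebra_simps)
  ultimately show "\<bar>(ex \<phi> m - x0) - ex \<phi> 0\<bar> \<le> 3 * M\<^sup>2 * (\<bar>m\<bar> + t)"
    "\<bar>(ey \<phi> m - y0) - ey \<phi> 0\<bar> \<le> 3 * M\<^sup>2 * (\<bar>m\<bar> + t)"
    using dx dy abs_x0_le abs_y0_le by linarith+
qed

lemma remainder_base_le:
  assumes "\<bar>m\<bar> \<le> 1" "\<bar>v\<bar> \<le> M"
  shows "\<bar>((cosh (m0 + m))\<^sup>2 - ch0\<^sup>2 - 2 * ch0 * sh0 * m) * v\<bar> \<le> 13 * M ^ 3 * (\<bar>m\<bar> + t)\<^sup>2"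
proof -
  have "\<bar>((cosh (m0 + m))\<^sup>2 - ch0\<^sup>2 - 2 * ch0 * sh0 * m) * v\<bar> \<le> 13 * M\<^sup>2 * m\<^sup>2 * M"
    using cosh_sq_m0_add_taylor[OF assms(1)] assms(2) by (rule abs_mult_le_mult)
  also have "\<dots> = 13 * M ^ 3 * m\<^sup>2" by algebra
  also have "\<dots> \<le> 13 * M ^ 3 * (\<bar>m\<bar> + t)\<^sup>2"
    using one_le_M t_nonneg power_mono[of "\<bar>m\<bar>" "\<bar>m\<bar> + t" 2] by (intro mult_left_mono) auto
  finally show ?thesis .
qed

lemma remainder_linear_le:
  assumes "\<bar>a\<bar> \<le> M" "\<bar>d\<bar> \<le> 3 * M\<^sup>2 * \<bar>m\<bar>" "\<bar>s\<bar> \<le> t"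
  shows "\<bar>2 * a * d * s\<bar> \<le> 6 * M ^ 3 * (\<bar>m\<bar> + t)\<^sup>2"
proof -
  have "\<bar>2 * a * d * s\<bar> \<le> 2 * M * (3 * M\<^sup>2 * \<bar>m\<bar>) * t"
    using abs_mult_le_mult[OF abs_mult_le_mult[OF _ assms(2)] assms(3), of "2 * a" "2 * M"] assms(1) by simp
  also have "\<dots> = 6 * M ^ 3 * (\<bar>m\<bar> * t)" by algebra
  also have "\<dots> \<le> 6 * M ^ 3 * (\<bar>m\<bar> + t)\<^sup>2"
    using one_le_M t_nonneg by (intro mult_left_mono) (auto simp: power2_eq_square intro: mult_mono)
  finally show ?thesis .
qed

lemma remainder_qform_le:
  assumes "\<bar>x - x'\<bar> \<le> 3 * M\<^sup>2 * (\<bar>m\<bar> + t)" "\<bar>y - y'\<bar> \<le> 3 * M\<^sup>2 * (\<bar>m\<bar> + t)"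
    and "\<bar>u - u'\<bar> \<le> 3 * M\<^sup>2 * (\<bar>m\<bar> + t)" "\<bar>v - v'\<bar> \<le> 3 * M\<^sup>2 * (\<bar>m\<bar> + t)"
    and "\<bar>u\<bar> \<le> M" "\<bar>v\<bar> \<le> M" "\<bar>x'\<bar> \<le> M" "\<bar>y'\<bar> \<le> M"
  shows "\<bar>qform p q r x y u v - qform p q r x' y' u' v'\<bar> \<le> 24 * M ^ 3 * (\<bar>m\<bar> + t)\<^sup>2"
proof -
  have "\<bar>qform p q r x y u v - qform p q r x' y' u' v'\<bar> \<le> 8 * t * M * (3 * M\<^sup>2 * (\<bar>m\<bar> + t))"
    using abs_p_le abs_q_le abs_r_le assms by (rule abs_qform_diff_le)
  also have "\<dots> = 24 * M ^ 3 * (t * (\<bar>m\<bar> + t))" by algebra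
  also have "\<dots> \<le> 24 * M ^ 3 * (\<bar>m\<bar> + t)\<^sup>2"
    using one_le_M t_nonneg by (intro mult_left_mono) (auto simp: power2_eq_square intro: mult_right_mono)
  finally show ?thesis .
qed

lemma abs_R_le:
  assumes "\<bar>m\<bar> \<le> 1"
  shows "\<bar>R \<phi> m\<bar> \<le> 51 * M ^ 3 * (\<bar>m\<bar> + t)\<^sup>2"
proof -
  define u where "u = \<bar>m\<bar> + t"
  note est = coordinate_estimates[OF assms, of \<phi>]
  have "\<bar>al0 * x0\<^sup>2\<bar> \<le> M * (t * t)" "\<bar>ga0 * y0\<^sup>2\<bar> \<le> M * (t * t)"
    using abs_mult_le_mult[OF abs_al0_le abs_mult_le_mult[OF abs_x0_le abs_x0_le]]
      abs_mult_le_mult[OF abs_ga0_le abs_mult_le_mult[OF abs_y0_le abs_y0_le]]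
    by (simp_all add: power2_eq_square)
  moreover have "M * (t * t) \<le> M ^ 3 * u\<^sup>2"
    using M_le_M3 t_nonneg one_le_M unfolding u_def by (intro mult_mono) (auto simp: power2_eq_square intro: mult_mono)
  ultimately have "\<bar>al0 * x0\<^sup>2\<bar> \<le> M ^ 3 * u\<^sup>2" "\<bar>ga0 * y0\<^sup>2\<bar> \<le> M ^ 3 * u\<^sup>2" by linarith+
  moreover have "51 * M ^ 3 * u\<^sup>2 = 13 * M ^ 3 * u\<^sup>2 + 24 * M ^ 3 * u\<^sup>2 + 6 * M ^ 3 * u\<^sup>2
      + 6 * M ^ 3 * u\<^sup>2 + M ^ 3 * u\<^sup>2 + M ^ 3 * u\<^sup>2" by simp
  ultimately show ?thesis
    using remainder_base_le[OF assms abs_w_le_M, of \<phi>] remainder_qform_le[OF est(7,8,7,8) est(1,2,3,4)]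
      remainder_linear_le[OF abs_al0_le est(5) abs_x0_le] remainder_linear_le[OF abs_ga0_le est(6) abs_y0_le]
    unfolding R_eq u_def[symmetric] abs_le_iff by (intro conjI; linarith)
qed

lemma Rphi_eq:
  "Rphi \<phi> m = ((cosh (m0 + m))\<^sup>2 - ch0\<^sup>2 - 2 * ch0 * sh0 * m) * dw \<phi>
     + 2 * (qform p q r (ex \<phi> m - x0) (ey \<phi> m - y0) (- c * cosh (m0 + m) * sin \<phi>) (c * sinh (m0 + m) * cos \<phi>)
        - qform p q r (ex \<phi> 0) (ey \<phi> 0) (- c * ch0 * sin \<phi>) (c * sh0 * cos \<phi>))
     - 2 * al0 * (c * (cosh (m0 + m) - ch0) * (- sin \<phi>)) * x0
     - 2 * ga0 * (c * (sinh (m0 + m) - sh0) * cos \<phi>) * y0"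
  unfolding Rphi_def Gphi_def Pphi_def dL_def dg_def by (simp add: algebra_simps)

lemma abs_Rphi_le:
  assumes "\<bar>m\<bar> \<le> 1"
  shows "\<bar>Rphi \<phi> m\<bar> \<le> 73 * M ^ 3 * (\<bar>m\<bar> + t)\<^sup>2"
proof -
  note est = coordinate_estimates[OF assms, of \<phi>]
  have dC: "\<bar>c * (cosh (m0 + m) - ch0) * (- sin \<phi>)\<bar> \<le> 3 * M\<^sup>2 * \<bar>m\<bar>"
    and dS: "\<bar>c * (sinh (m0 + m) - sh0) * cos \<phi>\<bar> \<le> 3 * M\<^sup>2 * \<bar>m\<bar>"
    using abs_scaled_cosh_diff_le[OF assms, of "- sin \<phi>"] abs_scaled_sinh_diff_le[OF assms abs_cos_le_one]
    by simp_all
  have "3 * M\<^sup>2 * \<bar>m\<bar> \<le> 3 * M\<^sup>2 * (\<bar>m\<bar> + t)" using t_nonneg by (simp add: mult_left_mono)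
  then have "\<bar>- c * cosh (m0 + m) * sin \<phi> - - c * ch0 * sin \<phi>\<bar> \<le> 3 * M\<^sup>2 * (\<bar>m\<bar> + t)"
    "\<bar>c * sinh (m0 + m) * cos \<phi> - c * sh0 * cos \<phi>\<bar> \<le> 3 * M\<^sup>2 * (\<bar>m\<bar> + t)"
    using dC dS by (simp_all add: algebra_simps)
  moreover have "\<bar>- c * cosh (m0 + m) * sin \<phi>\<bar> \<le> M" "\<bar>c * sinh (m0 + m) * cos \<phi>\<bar> \<le> M"
    using scaled_cosh_bound[OF assms abs_sin_le_one[of \<phi>]] scaled_sinh_bound[OF assms abs_cos_le_one[of \<phi>]]
    by (simp_all add: abs_mult)
  ultimately have "\<bar>qform p q r (ex \<phi> m - x0) (ey \<phi> m - y0) (- c * cosh (m0 + m) * sin \<phi>) (c * sinh (m0 + m) * cos \<phi>)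
      - qform p q r (ex \<phi> 0) (ey \<phi> 0) (- c * ch0 * sin \<phi>) (c * sh0 * cos \<phi>)\<bar> \<le> 24 * M ^ 3 * (\<bar>m\<bar> + t)\<^sup>2"
    using est by (intro remainder_qform_le)
  from abs_add_twice_diff_diff_le[OF remainder_base_le[OF assms abs_dw_le_M[of \<phi>]] this
    remainder_linear_le[OF abs_al0_le dC abs_x0_le] remainder_linear_le[OF abs_ga0_le dS abs_y0_le]]
  show ?thesis unfolding Rphi_eq by simp
qed

lemma abs_Rm_le:
  assumes "\<bar>m\<bar> \<le> 1"
  shows "\<bar>Rm \<phi> m\<bar> \<le> 12 * M ^ 3 * (\<bar>m\<bar> + t)"
proof -
  have "\<bar>2 * (cosh (m0 + m) * sinh (m0 + m) - ch0 * sh0) * w \<phi>\<bar> \<le> 2 * (6 * M\<^sup>2 * \<bar>m\<bar>) * M"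
    using abs_mult_le_mult[OF abs_mult_le_mult[OF _ abs_cosh_sinh_m0_add_diff_le[OF assms]] abs_w_le_M, of 2 2]
    by simp
  also have "\<dots> = 12 * M ^ 3 * \<bar>m\<bar>" by algebra
  finally have "\<bar>2 * (cosh (m0 + m) * sinh (m0 + m) - ch0 * sh0) * w \<phi>\<bar> \<le> 12 * M ^ 3 * \<bar>m\<bar>" .
  moreover have "12 * M\<^sup>2 * t \<le> 12 * M ^ 3 * t"
    using one_le_M t_nonneg by (intro mult_right_mono) (auto simp: power_increasing)
  moreover have "Rm \<phi> m = 2 * (cosh (m0 + m) * sinh (m0 + m) - ch0 * sh0) * w \<phi> + Pm \<phi> m"
    unfolding Rm_def Gm_def g_def by (simp add: algebra_simps)
  ultimately show ?thesis
    using abs_Pm_le[OF assms, of \<phi>] abs_triangle_ineq[of "2 * (cosh (m0 + m) * sinh (m0 + m) - ch0 * sh0) * w \<phi>" "Pm \<phi> m"]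
    by (simp add: algebra_simps)
qed

lemma nu_has_derivative: "(nu has_real_derivative dnu \<phi>) (at \<phi>)"
  unfolding dnu_def by (rule implicit_fn_has_derivative)

lemma Gm_nu_pos: "0 < Gm \<phi> (nu \<phi>)"
  using Gm_ge_lb[OF abs_implicit_fn_le] lb_pos by (rule order.strict_trans2[rotated])

lemma mu_lin_minus_nu_eq: "mu_lin \<phi> - nu \<phi> = R \<phi> (nu \<phi>) / g \<phi>"
  using G_implicit_fn[of \<phi>] g_pos[of \<phi>] unfolding mu_lin_def R_def by (simp add: field_simps)

lemma R_nu_has_derivative:
  "((\<lambda>\<phi>. R \<phi> (nu \<phi>)) has_real_derivative Rphi \<phi> (nu \<phi>) + Rm \<phi> (nu \<phi>) * dnu \<phi>) (at \<phi>)"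
proof -
  have "(\<lambda>\<phi>. R \<phi> (nu \<phi>)) = (\<lambda>\<phi>. - g \<phi> * nu \<phi> - L \<phi>)"
    using G_implicit_fn unfolding R_def by simp
  moreover have "((\<lambda>\<phi>. - g \<phi> * nu \<phi> - L \<phi>) has_real_derivative - (dg \<phi> * nu \<phi> + g \<phi> * dnu \<phi>) - dL \<phi>) (at \<phi>)"
    by (auto intro!: derivative_eq_intros g_has_derivative nu_has_derivative L_has_derivative)
  moreover have "Gphi \<phi> (nu \<phi>) + Gm \<phi> (nu \<phi>) * dnu \<phi> = 0"
    using Gm_nu_pos[of \<phi>] unfolding dnu_def by simp
  then have "- (dg \<phi> * nu \<phi> + g \<phi> * dnu \<phi>) - dL \<phi> = Rphi \<phi> (nu \<phi>) + Rm \<phi> (nu \<phi>) * dnu \<phi>"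
    unfolding Rphi_def Rm_def by (simp add: algebra_simps)
  ultimately show ?thesis by simp
qed

lemma mu_lin_minus_nu_has_derivative: "((\<lambda>\<phi>. mu_lin \<phi> - nu \<phi>) has_real_derivative d_error \<phi>) (at \<phi>)"
  unfolding mu_lin_minus_nu_eq d_error_def using g_pos[of \<phi>]
  by (auto intro!: derivative_eq_intros R_nu_has_derivative g_has_derivative simp: power2_eq_square)

lemma nu_plus_t_sq_le: "(\<bar>nu \<phi>\<bar> + t)\<^sup>2 \<le> (20 * M ^ 4 / lb + 1)\<^sup>2 * t\<^sup>2"
proof -
  have "\<bar>nu \<phi>\<bar> + t \<le> (20 * M ^ 4 / lb + 1) * t" using abs_nu_le[of \<phi>] by (simp add: algebra_simps)
  then show ?thesis using t_nonneg by (metis abs_ge_zero add_nonneg_nonneg power_mono power_mult_distrib)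
qed

lemma abs_nu_le_1: "\<bar>nu \<phi>\<bar> \<le> 1"
  using abs_implicit_fn_le r0_le_1 by (rule order_trans)

lemma abs_dnu_le: "\<bar>dnu \<phi>\<bar> \<le> 12 * M ^ 3 * (\<bar>nu \<phi>\<bar> + t) / lb"
  unfolding dnu_def using abs_Gphi_le[OF abs_nu_le_1, of \<phi>] lb_pos Gm_ge_lb[OF abs_implicit_fn_le]
  by (simp only: abs_minus_cancel divide_minus_left) (rule abs_divide_le_divide)

lemma abs_R_nu_derivative_le:
  "\<bar>Rphi \<phi> (nu \<phi>) + Rm \<phi> (nu \<phi>) * dnu \<phi>\<bar> \<le> (73 * M ^ 3 + 144 * M ^ 3 * (M ^ 3 / lb)) * (\<bar>nu \<phi>\<bar> + t)\<^sup>2"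
proof -
  have "\<bar>Rm \<phi> (nu \<phi>) * dnu \<phi>\<bar> \<le> 12 * M ^ 3 * (\<bar>nu \<phi>\<bar> + t) * (12 * M ^ 3 * (\<bar>nu \<phi>\<bar> + t) / lb)"
    using abs_Rm_le[OF abs_nu_le_1] abs_dnu_le by (rule abs_mult_le_mult)
  also have "\<dots> = 144 * M ^ 3 * (M ^ 3 / lb) * (\<bar>nu \<phi>\<bar> + t)\<^sup>2"
    using lb_pos by (simp add: field_simps power2_eq_square)
  moreover have "(73 * M ^ 3 + 144 * M ^ 3 * (M ^ 3 / lb)) * (\<bar>nu \<phi>\<bar> + t)\<^sup>2
      = 73 * M ^ 3 * (\<bar>nu \<phi>\<bar> + t)\<^sup>2 + 144 * M ^ 3 * (M ^ 3 / lb) * (\<bar>nu \<phi>\<bar> + t)\<^sup>2"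
    by (simp add: distrib_right)
  ultimately show ?thesis
    using abs_Rphi_le[OF abs_nu_le_1[of \<phi>], of \<phi>] abs_triangle_ineq[of "Rphi \<phi> (nu \<phi>)" "Rm \<phi> (nu \<phi>) * dnu \<phi>"]
    by linarith
qed

lemma abs_mu_lin_minus_nu_le: "\<bar>mu_lin \<phi> - nu \<phi>\<bar> \<le> K_error * t\<^sup>2"
proof -
  define Q where "Q = M ^ 3 / lb"
  have "1 \<le> Q" using one_le_M3_div_lb unfolding Q_def .
  then have Q: "1 \<le> Q" "Q \<le> Q\<^sup>2" by (simp_all add: power2_eq_square)
  have "\<bar>R \<phi> (nu \<phi>) / g \<phi>\<bar> \<le> 51 * M ^ 3 * (\<bar>nu \<phi>\<bar> + t)\<^sup>2 / lb"
    using abs_R_le[OF abs_nu_le_1] lb_pos lb_le_g by (rule abs_divide_le_divide)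
  also have "\<dots> = 51 * Q * (\<bar>nu \<phi>\<bar> + t)\<^sup>2" unfolding Q_def by simp
  also have "\<dots> \<le> 320 * Q\<^sup>2 * ((20 * M ^ 4 / lb + 1)\<^sup>2 * t\<^sup>2)"
    using Q nu_plus_t_sq_le[of \<phi>] by (intro mult_mono) auto
  finally show ?thesis unfolding mu_lin_minus_nu_eq K_error_def Q_def by (simp add: mult.assoc)
qed

lemma abs_d_error_le: "\<bar>d_error \<phi>\<bar> \<le> K_error * t\<^sup>2"
proof -
  define u where "u = \<bar>nu \<phi>\<bar> + t"
  define Q where "Q = M ^ 3 / lb"
  have "1 \<le> Q" using one_le_M3_div_lb unfolding Q_def .
  then have Q: "1 \<le> Q" "Q \<le> Q\<^sup>2" by (simp_all add: power2_eq_square)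
  have "M ^ 3 \<le> Q" using lb_pos lb_le_1 one_le_M unfolding Q_def by (simp add: field_simps mult_left_le)
  have "\<bar>(Rphi \<phi> (nu \<phi>) + Rm \<phi> (nu \<phi>) * dnu \<phi>) / g \<phi>\<bar> \<le> (73 * M ^ 3 + 144 * M ^ 3 * Q) * u\<^sup>2 / lb"
    using abs_R_nu_derivative_le lb_pos lb_le_g unfolding u_def Q_def by (rule abs_divide_le_divide)
  also have "\<dots> = (73 * Q + 144 * Q\<^sup>2) * u\<^sup>2" unfolding Q_def using lb_pos by (simp add: field_simps power2_eq_square)
  finally have first: "\<bar>(Rphi \<phi> (nu \<phi>) + Rm \<phi> (nu \<phi>) * dnu \<phi>) / g \<phi>\<bar> \<le> (73 * Q + 144 * Q\<^sup>2) * u\<^sup>2" .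
  have "\<bar>R \<phi> (nu \<phi>) * dg \<phi>\<bar> \<le> 51 * M ^ 3 * u\<^sup>2 * (2 * M ^ 3)"
    using abs_R_le[OF abs_nu_le_1] abs_dg_le unfolding u_def by (rule abs_mult_le_mult)
  moreover have "lb\<^sup>2 \<le> (g \<phi>)\<^sup>2" using lb_le_g lb_pos by (simp add: power_mono)
  ultimately have "\<bar>R \<phi> (nu \<phi>) * dg \<phi> / (g \<phi>)\<^sup>2\<bar> \<le> 51 * M ^ 3 * u\<^sup>2 * (2 * M ^ 3) / lb\<^sup>2"
    using lb_pos by (intro abs_divide_le_divide) auto
  also have "\<dots> = 102 * Q\<^sup>2 * u\<^sup>2" unfolding Q_def by (simp add: power2_eq_square)
  finally have second: "\<bar>R \<phi> (nu \<phi>) * dg \<phi> / (g \<phi>)\<^sup>2\<bar> \<le> 102 * Q\<^sup>2 * u\<^sup>2" .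
  have "d_error \<phi> = (Rphi \<phi> (nu \<phi>) + Rm \<phi> (nu \<phi>) * dnu \<phi>) / g \<phi> - R \<phi> (nu \<phi>) * dg \<phi> / (g \<phi>)\<^sup>2"
    unfolding d_error_def using g_pos[of \<phi>] by (simp add: field_simps power2_eq_square)
  then have "\<bar>d_error \<phi>\<bar> \<le> (73 * Q + 144 * Q\<^sup>2) * u\<^sup>2 + 102 * Q\<^sup>2 * u\<^sup>2"
    using first second abs_triangle_ineq4[of "(Rphi \<phi> (nu \<phi>) + Rm \<phi> (nu \<phi>) * dnu \<phi>) / g \<phi>"
        "R \<phi> (nu \<phi>) * dg \<phi> / (g \<phi>)\<^sup>2"]
    by linarith
  also have "\<dots> = 73 * (Q * u\<^sup>2) + 246 * (Q\<^sup>2 * u\<^sup>2)" by algebra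
  also have "\<dots> \<le> 320 * Q\<^sup>2 * u\<^sup>2"
  proof -
    have "0 \<le> Q\<^sup>2 * u\<^sup>2" by simp
    with mult_right_mono[OF Q(2) zero_le_power2[of u]] show ?thesis by linarith
  qed
  also have "\<dots> \<le> 320 * Q\<^sup>2 * ((20 * M ^ 4 / lb + 1)\<^sup>2 * t\<^sup>2)"
    using nu_plus_t_sq_le[of \<phi>] unfolding u_def by (intro mult_left_mono) auto
  finally show ?thesis unfolding K_error_def Q_def by (simp add: mult.assoc)
qed

lemma C1_norm_mu_lin_minus_nu_le: "C1_norm (\<lambda>\<phi>. mu_lin \<phi> - nu \<phi>) \<le> 2 * K_error * t\<^sup>2"
proof -
  have "deriv (\<lambda>\<phi>. mu_lin \<phi> - nu \<phi>) = d_error"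
    using mu_lin_minus_nu_has_derivative by (intro ext DERIV_imp_deriv)
  then have "C1_norm (\<lambda>\<phi>. mu_lin \<phi> - nu \<phi>) \<le> K_error * t\<^sup>2 + K_error * t\<^sup>2"
    using abs_mu_lin_minus_nu_le abs_d_error_le by (intro C1_norm_le) auto
  then show ?thesis by simp
qed

lemma approximating_ellipse:
  assumes "t \<le> B"
  shows "\<exists>mu. C1_periodic mu \<and> is_ellipse (perturbed_curve e0 c mu) \<and>
           C1_norm (\<lambda>\<phi>. mu_lin \<phi> - mu \<phi>) \<le> 2 * K_error * B\<^sup>2"
proof (intro exI conjI)
  have "t\<^sup>2 \<le> B\<^sup>2" using assms t_nonneg by (intro power_mono)
  then have "2 * K_error * t\<^sup>2 \<le> 2 * K_error * B\<^sup>2" using K_error_nonneg by (simp add: mult_left_mono)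
  with C1_norm_mu_lin_minus_nu_le show "C1_norm (\<lambda>\<phi>. mu_lin \<phi> - nu \<phi>) \<le> 2 * K_error * B\<^sup>2" by linarith
qed (fact C1_periodic_nu is_ellipse_perturbed_curve)+

lemma L_eq_trig_poly:
  assumes "p = - 2 * ch0 / sh0 * al0 * (a0 + a2)" "q = - 2 * ga0 * b2" "r = - 2 * ch0 / sh0 * ga0 * (a0 - a2)"
    and "x0 = a1 * c * ch0\<^sup>2 / sh0" "y0 = b1 * c * ch0"
  shows "L \<phi> = - 2 * ch0 / sh0 * (a0 + a1 * cos \<phi> + b1 * sin \<phi> + a2 * cos (2 * \<phi>) + b2 * sin (2 * \<phi>))"
proof -
  have nz: "c \<noteq> 0" "ch0 \<noteq> 0" "sh0 \<noteq> 0" using c_pos ch0_gt_1 sh0_pos by auto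
  have ex0: "ex \<phi> 0 = c * ch0 * cos \<phi>" and ey0: "ey \<phi> 0 = c * sh0 * sin \<phi>"
    unfolding ex_def ey_def ch0_def sh0_def by simp_all
  have "L \<phi> = - 2 * ch0 / sh0 * ((a0 + a2) * (cos \<phi>)\<^sup>2 + (a0 - a2) * (sin \<phi>)\<^sup>2
      + b2 * (2 * sin \<phi> * cos \<phi>) + a1 * cos \<phi> + b1 * sin \<phi>)"
    unfolding L_def qform_def ex0 ey0 unfolding assms al0_def ga0_def using nz
    by (simp add: field_simps power2_eq_square)
  also have "\<dots> = - 2 * ch0 / sh0 * (a0 + a1 * cos \<phi> + b1 * sin \<phi> + a2 * cos (2 * \<phi>) + b2 * sin (2 * \<phi>))"
  proof -
    have "(a0 + a2) * (cos \<phi>)\<^sup>2 + (a0 - a2) * (sin \<phi>)\<^sup>2 + b2 * (2 * sin \<phi> * cos \<phi>) + a1 * cos \<phi> + b1 * sin \<phi>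
        = a0 + a1 * cos \<phi> + b1 * sin \<phi> + a2 * cos (2 * \<phi>) + b2 * sin (2 * \<phi>)"
      unfolding cos_double sin_double using sin_cos_squared_add[of \<phi>] by algebra
    then show ?thesis by simp
  qed
  finally show ?thesis .
qed

lemma mu_lin_eq_elliptic_motions:
  assumes "p = - 2 * ch0 / sh0 * al0 * (a0 + a2)" "q = - 2 * ga0 * b2" "r = - 2 * ch0 / sh0 * ga0 * (a0 - a2)"
    and "x0 = a1 * c * ch0\<^sup>2 / sh0" "y0 = b1 * c * ch0"
  shows "mu_lin \<phi> = a0 * e_h e0 \<phi> + a1 * e_tau1 e0 \<phi> + b1 * e_tau2 e0 \<phi> + a2 * e_hr e0 \<phi> + b2 * e_r e0 \<phi>"
proof -
  define T where "T = a0 + a1 * cos \<phi> + b1 * sin \<phi> + a2 * cos (2 * \<phi>) + b2 * sin (2 * \<phi>)"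
  have "mu_lin \<phi> = 2 * ch0 / sh0 * T / g \<phi>" unfolding mu_lin_def L_eq_trig_poly[OF assms] T_def by simp
  also have "\<dots> = g \<phi> * e_h e0 \<phi> * T / g \<phi>" unfolding g_def g_mult_e_h ..
  also have "\<dots> = T * e_h e0 \<phi>" using g_pos[of \<phi>] by simp
  finally show ?thesis unfolding elliptic_motions_eq T_def .
qed

lemma abs_mu_lin_le_C1_norm:
  assumes "\<phi> \<in> {0..2 * pi}"
  shows "\<bar>mu_lin \<phi>\<bar> \<le> C1_norm mu_lin"
proof -
  define dmu where "dmu x = (- dL x * g x - - L x * dg x) / (g x * g x)" for x
  have "mu_lin = (\<lambda>x. - L x / g x)" by (rule ext) (simp add: mu_lin_def)
  moreover have "((\<lambda>x. - L x / g x) has_real_derivative dmu x) (at x)" for x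
    unfolding dmu_def
    by (rule DERIV_divide[OF DERIV_minus[OF L_has_derivative] g_has_derivative]) (use g_pos[of x] in simp)
  ultimately have "(mu_lin has_real_derivative dmu x) (at x)" for x by simp
  moreover have "continuous_on {0..2 * pi} dmu"
  proof -
    have "continuous_on UNIV L" "continuous_on UNIV g"
      using L_has_derivative g_has_derivative by (meson DERIV_isCont continuous_at_imp_continuous_on)+
    moreover have "continuous_on UNIV dL" "continuous_on UNIV dg"
      unfolding dL_def dg_def dw_def qform_def ex_def ey_def by (intro continuous_intros)+
    ultimately show ?thesis
      unfolding dmu_def using g_pos[THEN less_imp_neq, symmetric]
      by (intro continuous_intros; auto elim: continuous_on_subset)
  qed
  ultimately show ?thesis using assms by (rule abs_le_C1_norm)
qed

lemma elliptic_motion_coefficients_le: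
  assumes "p = - 2 * ch0 / sh0 * al0 * (a0 + a2)" "q = - 2 * ga0 * b2" "r = - 2 * ch0 / sh0 * ga0 * (a0 - a2)"
    and "x0 = a1 * c * ch0\<^sup>2 / sh0" "y0 = b1 * c * ch0"
  shows "\<bar>a0\<bar> + \<bar>a1\<bar> + \<bar>b1\<bar> + \<bar>a2\<bar> + \<bar>b2\<bar> \<le> 8 * C1_norm mu_lin"
proof (rule trig_poly_coefficients_le)
  fix \<phi> :: real
  assume \<phi>: "\<phi> \<in> {0..2 * pi}"
  define T where "T = a0 + a1 * cos \<phi> + b1 * sin \<phi> + a2 * cos (2 * \<phi>) + b2 * sin (2 * \<phi>)"
  have "\<bar>T\<bar> * 1 \<le> \<bar>T\<bar> * e_h e0 \<phi>" using one_le_e_h by (intro mult_left_mono) auto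
  also have "\<dots> = \<bar>mu_lin \<phi>\<bar>"
    unfolding mu_lin_eq_elliptic_motions[OF assms] elliptic_motions_eq T_def using one_le_e_h[of \<phi>]
    by (simp add: abs_mult)
  also have "\<dots> \<le> C1_norm mu_lin" using \<phi> by (rule abs_mu_lin_le_C1_norm)
  finally show "\<bar>T\<bar> \<le> C1_norm mu_lin" by simp
qed

end

theorem proposition3:
  fixes e0 c :: real
  assumes "0 < e0" "e0 < 1" "0 < c"
  shows "\<exists>C \<delta>. \<delta> > 0 \<and> (\<forall>a0 a1 b1 a2 b2 :: real.
           \<bar>a0\<bar> + \<bar>a1\<bar> + \<bar>b1\<bar> + \<bar>a2\<bar> + \<bar>b2\<bar> < \<delta> \<longrightarrow>
           (let mu1 = (\<lambda>\<phi>. a0 * e_h e0 \<phi> + a1 * e_tau1 e0 \<phi> + b1 * e_tau2 e0 \<phi>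
                          + a2 * e_hr e0 \<phi> + b2 * e_r e0 \<phi>)
            in \<exists>mu. C1_periodic mu \<and> is_ellipse (perturbed_curve e0 c mu) \<and>
                    C1_norm (\<lambda>\<phi>. mu1 \<phi> - mu \<phi>) \<le> C * (C1_norm mu1)\<^sup>2))"
proof -
  interpret confocal_ellipse e0 c using assms by unfold_locales
  show ?thesis unfolding Let_def
  proof (rule exI[of _ "2 * K_error * (8 * K_param)\<^sup>2"], rule exI[of _ "eps0 / (K_param + 1)"], intro conjI allI impI)
    show "0 < eps0 / (K_param + 1)" using eps0_pos K_param_nonneg by simp
    fix a0 a1 b1 a2 b2 :: real
    assume small: "\<bar>a0\<bar> + \<bar>a1\<bar> + \<bar>b1\<bar> + \<bar>a2\<bar> + \<bar>b2\<bar> < eps0 / (K_param + 1)"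
    \<comment> \<open>the conic whose linearization is \<open>mu1\<close> (\<open>L_eq_trig_poly\<close>)\<close>
    define p q r x0 y0 where "p = - 2 * ch0 / sh0 * al0 * (a0 + a2)" and "q = - 2 * ga0 * b2"
      and "r = - 2 * ch0 / sh0 * ga0 * (a0 - a2)" and "x0 = a1 * c * ch0\<^sup>2 / sh0" and "y0 = b1 * c * ch0"
    define t where "t = \<bar>p\<bar> + \<bar>q\<bar> + \<bar>r\<bar> + \<bar>x0\<bar> + \<bar>y0\<bar>"
    have t_le: "t \<le> K_param * (\<bar>a0\<bar> + \<bar>a1\<bar> + \<bar>b1\<bar> + \<bar>a2\<bar> + \<bar>b2\<bar>)"
      unfolding t_def p_def q_def r_def x0_def y0_def by (rule perturbation_size_le)
    also have "\<dots> \<le> K_param * (eps0 / (K_param + 1))" using small K_param_nonneg by (intro mult_left_mono) auto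
    also have "\<dots> \<le> eps0" using K_param_nonneg eps0_pos by (simp add: field_simps)
    finally interpret perturbed_conic e0 c p q r x0 y0 t by unfold_locales (auto simp: t_def)
    note params = p_def q_def r_def x0_def y0_def
    have "t \<le> K_param * (8 * C1_norm mu_lin)"
      using t_le mult_left_mono[OF elliptic_motion_coefficients_le[OF params] K_param_nonneg] by linarith
    from approximating_ellipse[OF this]
    show "\<exists>mu. C1_periodic mu \<and> is_ellipse (perturbed_curve e0 c mu) \<and>
        C1_norm (\<lambda>\<phi>. a0 * e_h e0 \<phi> + a1 * e_tau1 e0 \<phi> + b1 * e_tau2 e0 \<phi> + a2 * e_hr e0 \<phi> + b2 * e_r e0 \<phi> - mu \<phi>)
          \<le> 2 * K_error * (8 * K_param)\<^sup>2
             * (C1_norm (\<lambda>\<phi>. a0 * e_h e0 \<phi> + a1 * e_tau1 e0 \<phi> + b1 * e_tau2 e0 \<phi> + a2 * e_hr e0 \<phi> + b2 * e_r e0 \<phi>))\<^sup>2"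
      by (simp add: mu_lin_eq_elliptic_motions[OF params, symmetric] power_mult_distrib mult.assoc)
  qed
qed

end
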